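(* Let $\alpha>1$, $s>0$, $L\ge 1$ and $D\ge 1$. Let $\mathcal{D}=(\mathbf{X},\mathbf{Y},\mathbf{A})$ and $\mathcal{D}'=(\mathbf{X}',\mathbf{Y}',\mathbf{A}')$ be graph datasets that are either node-level adjacent or $k$-neighbor-level adjacent (for some $k\ge 0$), with replaced node index $r$. Assume that every node has out-degree at most $D$ in both $\mathbf{A}$ and $\mathbf{A}'$, and that the random weights satisfy $D_\alpha(\mathbf{W}^{(X)}\,\|\,\mathbf{W}^{(X)\prime})\le\gamma_1$, where $\mathbf{W}^{(X)}$ and $\mathbf{W}^{(X)\prime}$ are the weights produced on $\mathcal{D}$ and $\mathcal{D}'$ respectively. Let $\mathbf{Z}$ and $\mathbf{Z}'$ be the GAP embeddings computed from $\mathcal{D}$ and $\mathcal{D}'$. Then $$D_\alpha(\mathbf{Z}_{\setminus r}\,\|\,\mathbf{Z}'_{\setminus r})\le \gamma_1+\frac{4DL\alpha}{2s^2}.$$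
   Context: A graph dataset is $\mathcal{D}=(\mathbf{X},\mathbf{Y},\mathbf{A})$ with node set $[n]$, feature matrix $\mathbf{X}\in\mathbb{R}^{n\times F}$, label matrix $\mathbf{Y}\in\{0,1\}^{m\times C}$ (one-hot rows; nodes $1,\dots,m$ are labeled), and adjacency matrix $\mathbf{A}\in\{0,1\}^{n\times n}$ of a directed graph without self-loops ($\mathbf{A}_{ii}=0$). The out-neighborhood of $r$ is $N(r)=\{i:\mathbf{A}_{ir}=1\}$ and the out-degree of $r$ is the column sum $\sum_i\mathbf{A}_{ir}$. For a matrix $\mathbf{S}$, $\mathbf{S}_i$ is its $i$-th row and $\mathbf{S}_{\setminus r}$ is the submatrix obtained by deleting the $r$-th row. Node-level adjacency: there is an index $r\in[n]$ such that $\mathcal{D}'$ is obtained from $\mathcal{D}$ by replacing $\mathbf{X}_r$ by an arbitrary vector, $\mathbf{Y}_r$ (if $r\le m$) by an arbitrary one-hot vector, and arbitrarily changing entries of the $r$-th row and $r$-th column of $\mathbf{A}$ (keeping no self-loops); all other entries are unchanged. $k$-neighbor-level adjacency: the same, except that at most $k$ entries of the $r$-th row and at most $k$ entries of the $r$-th column of $\mathbf{A}$ are changed (excluding $\mathbf{A}_{rr}$). Row-normalization divides each row by its Euclidean norm. For $\alpha>1$ the Rényi divergence of random variables $X\sim P$, $Y\sim Q$ is $D_\alpha(X\|Y)=\frac{1}{\alpha-1}\log\mathbb{E}_{x\sim Q}[(P(x)/Q(x))^\alpha]$. GAP embedding: $\mathbf{W}^{(X)}$ is a random weight (output of a randomized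 training algorithm on the dataset) and $f(\cdot;\mathbf{W})$ is a map whose $i$-th output row depends only on $\mathbf{X}_i$ and $\mathbf{W}$; set $\mathbf{H}^{(0)}=\text{row-normalization}(f(\mathbf{X};\mathbf{W}^{(X)}))$ and, for $l=0,\dots,L-1$, $\mathbf{H}^{(l+1)}=\text{row-normalization}(\mathbf{A}\mathbf{H}^{(l)}+\mathbf{N}^{(l)})$, where the $\mathbf{N}^{(l)}$ have i.i.d. $\mathcal{N}(0,s^2)$ entries and are mutually independent and independent of $\mathbf{W}^{(X)}$; finally $\mathbf{Z}$ is the column-wise concatenation $\mathbf{H}^{(0)}\Vert\cdots\Vert\mathbf{H}^{(L)}$. $\mathbf{Z}'$ is defined in the same way from $\mathcal{D}'$. *)

theory Defs
  imports "HOL-Probability.Probability"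
begin

definition renyi_divergence :: "real \<Rightarrow> 'a measure \<Rightarrow> 'a measure \<Rightarrow> ereal" where
  "renyi_divergence \<alpha> P Q =
    (if sets P = sets Q \<and> absolutely_continuous Q P then
       (let I = (\<integral>\<^sup>+ x. ennreal ((enn2real (RN_deriv Q P x)) powr \<alpha>) \<partial>Q)
        in if I = \<infinity> then \<infinity> else ereal (ln (enn2real I) / (\<alpha> - 1)))
     else \<infinity>)"

definition row_normalize :: "real ^ 'd \<Rightarrow> real ^ 'd" where
  "row_normalize x = x /\<^sub>R norm x"

(* Graph dataset with nodes 0..<n, labeled nodes 0..<m, classes 0..<C
   (a one-hot label row is represented by its class index),
   features X i, labels Y i, adjacency A i j (= entry A_ij). *)
definition valid_dataset ::
  "nat \<Rightarrow> nat \<Rightarrow> nat \<Rightarrow> (nat \<Rightarrow> nat) \<Rightarrow> (nat \<Rightarrow> nat \<Rightarrow> bool) \<Rightarrow> bool" where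
  "valid_dataset n m C Y A \<longleftrightarrow>
     m \<le> n \<and> (\<forall>i<m. Y i < C) \<and> (\<forall>i j. A i j \<longrightarrow> i < n \<and> j < n) \<and> (\<forall>i. \<not> A i i)"

definition node_adjacent ::
  "nat \<Rightarrow> nat \<Rightarrow> nat \<Rightarrow> nat \<Rightarrow>
   (nat \<Rightarrow> 'x) \<Rightarrow> (nat \<Rightarrow> nat) \<Rightarrow> (nat \<Rightarrow> nat \<Rightarrow> bool) \<Rightarrow>
   (nat \<Rightarrow> 'x) \<Rightarrow> (nat \<Rightarrow> nat) \<Rightarrow> (nat \<Rightarrow> nat \<Rightarrow> bool) \<Rightarrow> bool" where
  "node_adjacent n m C r X Y A X' Y' A' \<longleftrightarrow>
     r < n \<and> valid_dataset n m C Y A \<and> valid_dataset n m C Y' A' \<and>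
     (\<forall>i<n. i \<noteq> r \<longrightarrow> X' i = X i) \<and>
     (\<forall>i<m. i \<noteq> r \<longrightarrow> Y' i = Y i) \<and>
     (\<forall>i<n. \<forall>j<n. i \<noteq> r \<and> j \<noteq> r \<longrightarrow> A' i j = A i j)"

definition k_neighbor_adjacent ::
  "nat \<Rightarrow> nat \<Rightarrow> nat \<Rightarrow> nat \<Rightarrow> nat \<Rightarrow>
   (nat \<Rightarrow> 'x) \<Rightarrow> (nat \<Rightarrow> nat) \<Rightarrow> (nat \<Rightarrow> nat \<Rightarrow> bool) \<Rightarrow>
   (nat \<Rightarrow> 'x) \<Rightarrow> (nat \<Rightarrow> nat) \<Rightarrow> (nat \<Rightarrow> nat \<Rightarrow> bool) \<Rightarrow> bool" where
  "k_neighbor_adjacent k n m C r X Y A X' Y' A' \<longleftrightarrow>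
     node_adjacent n m C r X Y A X' Y' A' \<and>
     card {j. j < n \<and> j \<noteq> r \<and> A r j \<noteq> A' r j} \<le> k \<and>
     card {i. i < n \<and> i \<noteq> r \<and> A i r \<noteq> A' i r} \<le> k"

(* out-degree of node j = column sum = card {i. A i j} *)
definition max_out_degree_le :: "nat \<Rightarrow> (nat \<Rightarrow> nat \<Rightarrow> bool) \<Rightarrow> nat \<Rightarrow> bool" where
  "max_out_degree_le n A D \<longleftrightarrow> (\<forall>j<n. card {i. i < n \<and> A i j} \<le> D)"

(* GAP layers: gap_H f n X A w N l i is row i of H^(l), where
   f w x is the i-th output row of f(X;W) for a row x = X_i,
   and N l i c is entry (i,c) of the noise matrix N^(l). *)
primrec gap_H ::
  "('w \<Rightarrow> 'x \<Rightarrow> real ^ 'd) \<Rightarrow> nat \<Rightarrow> (nat \<Rightarrow> 'x) \<Rightarrow> (nat \<Rightarrow> nat \<Rightarrow> bool) \<Rightarrow>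
   'w \<Rightarrow> (nat \<Rightarrow> nat \<Rightarrow> 'd \<Rightarrow> real) \<Rightarrow> nat \<Rightarrow> nat \<Rightarrow> real ^ 'd" where
  "gap_H f n X A w N 0 i = row_normalize (f w (X i))"
| "gap_H f n X A w N (Suc l) i =
     row_normalize ((\<Sum>j<n. if A i j then gap_H f n X A w N l j else 0) + (\<chi> c. N l i c))"

definition gap_noise :: "nat \<Rightarrow> nat \<Rightarrow> real \<Rightarrow> (nat \<Rightarrow> nat \<Rightarrow> 'd::finite \<Rightarrow> real) measure" where
  "gap_noise n L s =
     PiM {..<L} (\<lambda>l. PiM {..<n} (\<lambda>i. PiM UNIV (\<lambda>c::'d. density lborel (normal_density 0 s))))"

(* Law of Z_{\ r}: rows i in [n]-{r}, each row the concatenation of H^(0)_i,...,H^(L)_i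
   (represented as a map l \<in> {0..L} to the block H^(l)_i). *)
definition gap_Z_minus_dist ::
  "('w \<Rightarrow> 'x \<Rightarrow> real ^ 'd::finite) \<Rightarrow> nat \<Rightarrow> nat \<Rightarrow> real \<Rightarrow> nat \<Rightarrow>
   (nat \<Rightarrow> 'x) \<Rightarrow> (nat \<Rightarrow> nat \<Rightarrow> bool) \<Rightarrow> 'w measure \<Rightarrow>
   (nat \<Rightarrow> nat \<Rightarrow> real ^ 'd) measure" where
  "gap_Z_minus_dist f n L s r X A PW =
     distr (PW \<Otimes>\<^sub>M gap_noise n L s)
       (PiM ({..<n} - {r}) (\<lambda>i. PiM {..L} (\<lambda>l. borel)))
       (\<lambda>(w, N). \<lambda>i\<in>{..<n} - {r}. \<lambda>l\<in>{..L}. gap_H f n X A w N l i)"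

end

theory Submission
  imports Defs
begin

text \<open>Fix the weights. The noise added to layer l of the run on D is coupled with the noise of the
  run on D' by an adaptive shift: row i \<noteq> r is shifted by (A' H')_i - (A H)_i, computed from the
  already coupled lower layers, so that every row except the r-th is the same in both runs. Only
  rows with an edge to r are shifted, each by a difference of two vectors of norm at most 1, so the
  squared norm of the shift of one layer is at most 4D. A Gaussian shift by c has Renyi moment
  E[(dP/dQ)^\<alpha>] = exp(\<alpha>(\<alpha>-1)|c|^2/(2s^2)). Hence the law of Z without row r on D is the image of
  the law of (weights, noise) on D' reweighted by a density whose \<alpha>-th moment is at most
  exp((\<alpha>-1)\<gamma>1) exp(L\<alpha>(\<alpha>-1)4D/(2s^2)), and the data processing inequality gives the bound.\<close>

section \<open>Renyi moments and the data processing inequality\<close>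

definition renyi_moment :: "real \<Rightarrow> 'a measure \<Rightarrow> 'a measure \<Rightarrow> ennreal" where
  "renyi_moment \<alpha> P Q = (\<integral>\<^sup>+x. ennreal (enn2real (RN_deriv Q P x) powr \<alpha>) \<partial>Q)"

lemma renyi_divergence_eq_ln_renyi_moment:
  assumes "sets P = sets Q" "absolutely_continuous Q P" "renyi_moment \<alpha> P Q \<noteq> \<infinity>"
  shows "renyi_divergence \<alpha> P Q = ereal (ln (enn2real (renyi_moment \<alpha> P Q)) / (\<alpha> - 1))"
  using assms unfolding renyi_divergence_def renyi_moment_def by (simp add: Let_def)

lemma renyi_divergence_le_ereal_D:
  assumes "renyi_divergence \<alpha> P Q \<le> ereal \<gamma>"
  shows "sets P = sets Q" "absolutely_continuous Q P" "renyi_moment \<alpha> P Q \<noteq> \<infinity>"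
    and "ln (enn2real (renyi_moment \<alpha> P Q)) / (\<alpha> - 1) \<le> \<gamma>"
proof -
  have cond: "sets P = sets Q \<and> absolutely_continuous Q P"
  proof (rule ccontr)
    assume "\<not> ?thesis"
    then have "renyi_divergence \<alpha> P Q = \<infinity>" unfolding renyi_divergence_def by auto
    with assms show False by simp
  qed
  moreover have "renyi_moment \<alpha> P Q \<noteq> \<infinity>"
  proof
    assume "renyi_moment \<alpha> P Q = \<infinity>"
    with cond have "renyi_divergence \<alpha> P Q = \<infinity>"
      unfolding renyi_divergence_def renyi_moment_def by (simp add: Let_def)
    with assms show False by simp
  qed
  ultimately show "sets P = sets Q" "absolutely_continuous Q P" "renyi_moment \<alpha> P Q \<noteq> \<infinity>"
    and "ln (enn2real (renyi_moment \<alpha> P Q)) / (\<alpha> - 1) \<le> \<gamma>"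
    using assms renyi_divergence_eq_ln_renyi_moment[of P Q \<alpha>] by auto
qed

lemma renyi_moment_neq_0:
  assumes P: "prob_space P" and Q: "prob_space Q" and sets_eq: "sets P = sets Q"
    and ac: "absolutely_continuous Q P" and \<alpha>: "\<alpha> > 0"
  shows "renyi_moment \<alpha> P Q \<noteq> 0"
proof
  interpret Q: prob_space Q by (rule Q)
  interpret P: prob_space P by (rule P)
  let ?h = "RN_deriv Q P"
  assume "renyi_moment \<alpha> P Q = 0"
  then have "AE y in Q. ennreal (enn2real (?h y) powr \<alpha>) = 0"
    unfolding renyi_moment_def by (simp add: nn_integral_0_iff_AE)
  moreover have "AE y in Q. ?h y \<noteq> \<infinity>"
    by (rule Q.RN_deriv_finite[OF _ ac sets_eq]) (simp add: P.sigma_finite_measure)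
  ultimately have "AE y in Q. ?h y = 0"
    by eventually_elim (auto simp: enn2real_eq_0_iff)
  then have "(\<integral>\<^sup>+y. ?h y \<partial>Q) = 0" by (simp add: nn_integral_0_iff_AE)
  moreover have "(\<integral>\<^sup>+y. ?h y \<partial>Q) = emeasure P (space P)"
  proof -
    have "emeasure P (space P) = emeasure (density Q ?h) (space Q)"
      using sets_eq_imp_space_eq[OF sets_eq] Q.density_RN_deriv[OF ac sets_eq] by simp
    also have "\<dots> = (\<integral>\<^sup>+y. ?h y \<partial>Q)"
      by (subst emeasure_density) (auto intro!: nn_integral_cong)
    finally show ?thesis by simp
  qed
  ultimately show False using P.emeasure_space_1 by simp
qed

lemma renyi_divergence_le_of_renyi_moment_le:
  assumes "prob_space P" "prob_space Q" "sets P = sets Q" "absolutely_continuous Q P"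
    and \<alpha>: "\<alpha> > 1" and bound: "renyi_moment \<alpha> P Q \<le> ennreal B"
  shows "renyi_divergence \<alpha> P Q \<le> ereal (ln B / (\<alpha> - 1))"
proof -
  let ?I = "renyi_moment \<alpha> P Q"
  have finite: "?I \<noteq> \<infinity>" using bound by (auto simp: top_unique)
  have nonzero: "?I \<noteq> 0" using renyi_moment_neq_0[OF assms(1-4)] \<alpha> by simp
  have pos: "enn2real ?I > 0"
    using finite nonzero by (simp add: enn2real_positive_iff zero_less_iff_neq_zero top.not_eq_extremum)
  have "B \<ge> 0"
  proof (rule ccontr)
    assume "\<not> B \<ge> 0"
    then show False using bound nonzero by (simp add: ennreal_neg)
  qed
  then have "enn2real ?I \<le> B" using bound by (simp add: enn2real_leI)
  then have "ln (enn2real ?I) / (\<alpha> - 1) \<le> ln B / (\<alpha> - 1)"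
    using pos \<alpha> by (simp add: divide_right_mono)
  then show ?thesis
    using renyi_divergence_eq_ln_renyi_moment[OF assms(3,4) finite] by simp
qed

lemma absolutely_continuous_distr_density:
  assumes "g \<in> M \<rightarrow>\<^sub>M N" and "\<rho> \<in> borel_measurable M"
  shows "absolutely_continuous (distr M N g) (distr (density M \<rho>) N g)"
  unfolding absolutely_continuous_def
proof
  fix A assume "A \<in> null_sets (distr M N g)"
  then have "A \<in> sets N" "g -` A \<inter> space M \<in> null_sets M"
    using assms by (auto simp: null_sets_distr_iff)
  then show "A \<in> null_sets (distr (density M \<rho>) N g)"
    using assms by (auto simp: null_sets_distr_iff null_sets_density_iff intro!: AE_I')
qed

lemma Youngs_inequality_powr:
  fixes a b \<alpha> :: real
  assumes "\<alpha> > 1" "a \<ge> 0" "b \<ge> 0"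
  shows "a powr (\<alpha> - 1) * b \<le> (\<alpha> - 1) / \<alpha> * a powr \<alpha> + 1 / \<alpha> * b powr \<alpha>"
proof -
  have "a powr (\<alpha> - 1) * b \<le> (a powr (\<alpha> - 1)) powr (\<alpha> / (\<alpha> - 1)) / (\<alpha> / (\<alpha> - 1)) + b powr \<alpha> / \<alpha>"
    using assms by (intro Youngs_inequality) (auto simp: field_simps)
  also have "(a powr (\<alpha> - 1)) powr (\<alpha> / (\<alpha> - 1)) = a powr \<alpha>"
    using assms by (simp add: powr_powr)
  finally show ?thesis by (simp add: mult.commute)
qed

lemma ennreal_le_of_le_convex_combination:
  assumes "x \<noteq> \<infinity>" "0 \<le> c" "c < 1" and le: "x \<le> ennreal c * x + ennreal (1 - c) * ennreal B"
  shows "x \<le> ennreal B"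
proof -
  obtain j where j: "x = ennreal j" "j \<ge> 0" using assms(1) by (cases x) auto
  define B' where "B' = max B 0"
  have B': "ennreal B = ennreal B'" "B' \<ge> 0" unfolding B'_def by (auto simp: max_def ennreal_neg)
  have "ennreal j \<le> ennreal (c * j + (1 - c) * B')"
    using le j assms(2,3) B' by (simp add: ennreal_mult'[symmetric] ennreal_plus[symmetric] del: ennreal_plus)
  then have "j \<le> c * j + (1 - c) * B'"
    using assms(2,3) B' j by (subst (asm) ennreal_le_iff) (auto intro!: add_nonneg_nonneg)
  then have "(1 - c) * j \<le> (1 - c) * B'" by (simp add: algebra_simps)
  then have "j \<le> B'" using assms(3) by simp
  then show ?thesis using j B' by simp
qed

lemma nn_integral_powr_eq_SUP_min:
  fixes t :: "'a \<Rightarrow> real"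
  assumes t: "t \<in> borel_measurable M" "\<And>x. t x \<ge> 0" and \<alpha>: "\<alpha> > 0"
  shows "(\<integral>\<^sup>+x. ennreal (t x powr \<alpha>) \<partial>M) = (SUP m::nat. \<integral>\<^sup>+x. ennreal (min (t x) (real m) powr \<alpha>) \<partial>M)"
proof -
  have "(\<integral>\<^sup>+x. ennreal (t x powr \<alpha>) \<partial>M) = (\<integral>\<^sup>+x. (SUP m::nat. ennreal (min (t x) (real m) powr \<alpha>)) \<partial>M)"
  proof (rule nn_integral_cong)
    fix x
    obtain m :: nat where "t x \<le> real m" using real_arch_simple by blast
    then have "ennreal (t x powr \<alpha>) \<le> (SUP m::nat. ennreal (min (t x) (real m) powr \<alpha>))"
      by (intro SUP_upper2[of m]) simp_all
    moreover have "(SUP m::nat. ennreal (min (t x) (real m) powr \<alpha>)) \<le> ennreal (t x powr \<alpha>)"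
      using \<alpha> t(2) by (intro SUP_least ennreal_leI powr_mono2) auto
    ultimately show "ennreal (t x powr \<alpha>) = (SUP m::nat. ennreal (min (t x) (real m) powr \<alpha>))"
      by (rule antisym)
  qed
  also have "\<dots> = (SUP m::nat. \<integral>\<^sup>+x. ennreal (min (t x) (real m) powr \<alpha>) \<partial>M)"
  proof (rule nn_integral_monotone_convergence_SUP)
    show "incseq (\<lambda>m x. ennreal (min (t x) (real m) powr \<alpha>))"
      using \<alpha> t(2) by (auto simp: incseq_def le_fun_def intro!: ennreal_leI powr_mono2)
  qed (use t(1) in measurable)
  finally show ?thesis .
qed

lemma nn_integral_powr_le_nn_integral_RN_deriv:
  fixes k :: "'a \<Rightarrow> real"
  assumes Q: "sigma_finite_measure Q" and ac: "absolutely_continuous Q P" and sets_eq: "sets P = sets Q"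
    and k: "k \<in> borel_measurable Q" "\<And>y. 0 \<le> k y" "\<And>y. k y \<le> enn2real (RN_deriv Q P y)"
    and \<alpha>: "\<alpha> > 0"
  shows "(\<integral>\<^sup>+y. ennreal (k y powr \<alpha>) \<partial>Q) \<le> (\<integral>\<^sup>+y. ennreal (k y powr (\<alpha> - 1)) \<partial>P)"
proof -
  interpret Q: sigma_finite_measure Q by (rule Q)
  let ?h = "RN_deriv Q P"
  have "(\<integral>\<^sup>+y. ennreal (k y powr \<alpha>) \<partial>Q) \<le> (\<integral>\<^sup>+y. ?h y * ennreal (k y powr (\<alpha> - 1)) \<partial>Q)"
  proof (intro nn_integral_mono)
    fix y
    show "ennreal (k y powr \<alpha>) \<le> ?h y * ennreal (k y powr (\<alpha> - 1))"
    proof (cases "?h y = \<top>")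
      case True
      then have "k y = 0" using k(2,3)[of y] by simp
      then show ?thesis using \<alpha> by simp
    next
      case False
      then obtain t where t: "?h y = ennreal t" "t \<ge> 0" by (cases "?h y") auto
      have "k y powr \<alpha> = k y powr (\<alpha> - 1) * k y powr 1"
        by (metis powr_add diff_add_cancel)
      also have "\<dots> \<le> k y powr (\<alpha> - 1) * t"
        using k(2,3)[of y] t by (intro mult_left_mono) auto
      finally show ?thesis
        unfolding t(1) using t(2) by (simp add: ennreal_mult'[symmetric] ennreal_leI mult.commute)
    qed
  qed
  also have "\<dots> = (\<integral>\<^sup>+y. ennreal (k y powr (\<alpha> - 1)) \<partial>density Q ?h)"
    using k(1) by (simp add: nn_integral_density)
  finally show ?thesis using Q.density_RN_deriv[OF ac sets_eq] by simp
qed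

text \<open>Truncating dP/dQ at level m keeps all integrals finite, so that Young's inequality can be
  absorbed; monotone convergence then removes the truncation.\<close>

lemma renyi_moment_distr_density_le:
  fixes \<rho> :: "'a \<Rightarrow> real"
  assumes \<alpha>: "\<alpha> > 1" and M: "prob_space M" and g[measurable]: "g \<in> M \<rightarrow>\<^sub>M N"
    and \<rho>[measurable]: "\<rho> \<in> borel_measurable M" and \<rho>_nonneg: "\<And>x. \<rho> x \<ge> 0"
    and P: "prob_space (distr (density M (\<lambda>x. ennreal (\<rho> x))) N g)"
    and bound: "(\<integral>\<^sup>+x. ennreal (\<rho> x powr \<alpha>) \<partial>M) \<le> ennreal B"
  shows "renyi_moment \<alpha> (distr (density M (\<lambda>x. ennreal (\<rho> x))) N g) (distr M N g) \<le> ennreal B"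
proof -
  define P where "P = distr (density M (\<lambda>x. ennreal (\<rho> x))) N g"
  define Q where "Q = distr M N g"
  interpret Q: prob_space Q unfolding Q_def using M g by (simp add: prob_space.prob_space_distr)
  have sets_eq: "sets P = sets Q" unfolding P_def Q_def by simp
  have ac: "absolutely_continuous Q P"
    unfolding P_def Q_def by (rule absolutely_continuous_distr_density) simp_all
  define t where "t y = enn2real (RN_deriv Q P y)" for y
  have [measurable]: "t \<in> borel_measurable N"
    unfolding t_def Q_def by (simp cong: measurable_cong_sets)
  have truncated: "(\<integral>\<^sup>+y. ennreal (min (t y) (real m) powr \<alpha>) \<partial>Q) \<le> ennreal B" for m :: nat
  proof -
    define k where "k y = min (t y) (real m)" for y
    have k_nonneg: "k y \<ge> 0" for y unfolding k_def t_def by simp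
    have [measurable]: "k \<in> borel_measurable N" unfolding k_def by simp
    let ?J = "\<integral>\<^sup>+y. ennreal (k y powr \<alpha>) \<partial>Q"
    let ?c = "(\<alpha> - 1) / \<alpha>"
    have "?J \<le> (\<integral>\<^sup>+y. ennreal (real m powr \<alpha>) \<partial>Q)"
      using \<alpha> by (intro nn_integral_mono ennreal_leI powr_mono2) (auto simp: k_def k_nonneg t_def)
    then have finite: "?J \<noteq> \<infinity>" by (auto simp: Q.emeasure_space_1 top_unique)
    have "?J \<le> (\<integral>\<^sup>+y. ennreal (k y powr (\<alpha> - 1)) \<partial>P)"
      using \<alpha> k_nonneg by (intro nn_integral_powr_le_nn_integral_RN_deriv[OF Q.sigma_finite_measure ac sets_eq])
        (auto simp: k_def t_def Q_def cong: measurable_cong_sets)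
    also have "\<dots> = (\<integral>\<^sup>+x. ennreal (\<rho> x) * ennreal (k (g x) powr (\<alpha> - 1)) \<partial>M)"
      unfolding P_def by (simp add: nn_integral_distr nn_integral_density)
    also have "\<dots> \<le> (\<integral>\<^sup>+x. ennreal ?c * ennreal (k (g x) powr \<alpha>) + ennreal (1 - ?c) * ennreal (\<rho> x powr \<alpha>) \<partial>M)"
    proof (intro nn_integral_mono)
      fix x
      have "k (g x) powr (\<alpha> - 1) * \<rho> x \<le> ?c * k (g x) powr \<alpha> + (1 - ?c) * \<rho> x powr \<alpha>"
        using Youngs_inequality_powr[OF \<alpha> k_nonneg \<rho>_nonneg] \<alpha> by (simp add: diff_divide_distrib)
      then show "ennreal (\<rho> x) * ennreal (k (g x) powr (\<alpha> - 1))
          \<le> ennreal ?c * ennreal (k (g x) powr \<alpha>) + ennreal (1 - ?c) * ennreal (\<rho> x powr \<alpha>)"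
        using \<alpha> \<rho>_nonneg[of x]
        by (simp add: ennreal_mult'[symmetric] ennreal_plus[symmetric] mult.commute del: ennreal_plus)
    qed
    also have "\<dots> = ennreal ?c * ?J + ennreal (1 - ?c) * (\<integral>\<^sup>+x. ennreal (\<rho> x powr \<alpha>) \<partial>M)"
      unfolding Q_def by (simp add: nn_integral_add nn_integral_cmult nn_integral_distr)
    also have "\<dots> \<le> ennreal ?c * ?J + ennreal (1 - ?c) * ennreal B"
      by (intro add_mono mult_left_mono bound) auto
    finally have "?J \<le> ennreal ?c * ?J + ennreal (1 - ?c) * ennreal B" .
    moreover have "0 \<le> ?c" "?c < 1" using \<alpha> by auto
    ultimately show ?thesis
      unfolding k_def by (intro ennreal_le_of_le_convex_combination[OF finite[unfolded k_def]])
  qed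
  have "renyi_moment \<alpha> P Q = (SUP m::nat. \<integral>\<^sup>+y. ennreal (min (t y) (real m) powr \<alpha>) \<partial>Q)"
    unfolding renyi_moment_def t_def[symmetric]
    using \<alpha> by (intro nn_integral_powr_eq_SUP_min) (simp_all add: t_def Q_def)
  also have "\<dots> \<le> ennreal B" by (intro SUP_least truncated)
  finally show ?thesis unfolding P_def Q_def .
qed

lemma renyi_divergence_distr_density_le:
  fixes \<rho> :: "'a \<Rightarrow> real"
  assumes \<alpha>: "\<alpha> > 1" and M: "prob_space M" and g: "g \<in> M \<rightarrow>\<^sub>M N"
    and \<rho>: "\<rho> \<in> borel_measurable M" "\<And>x. \<rho> x \<ge> 0"
    and P: "prob_space (distr (density M (\<lambda>x. ennreal (\<rho> x))) N g)"
    and bound: "(\<integral>\<^sup>+x. ennreal (\<rho> x powr \<alpha>) \<partial>M) \<le> ennreal B"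
  shows "renyi_divergence \<alpha> (distr (density M (\<lambda>x. ennreal (\<rho> x))) N g) (distr M N g)
     \<le> ereal (ln B / (\<alpha> - 1))"
proof (rule renyi_divergence_le_of_renyi_moment_le[OF P _ _ _ \<alpha>])
  show "prob_space (distr M N g)" using M g by (simp add: prob_space.prob_space_distr)
  show "absolutely_continuous (distr M N g) (distr (density M (\<lambda>x. ennreal (\<rho> x))) N g)"
    using g \<rho> by (intro absolutely_continuous_distr_density) simp_all
  show "renyi_moment \<alpha> (distr (density M (\<lambda>x. ennreal (\<rho> x))) N g) (distr M N g) \<le> ennreal B"
    by (rule renyi_moment_distr_density_le[OF assms])
qed simp

section \<open>Change of measure on product spaces\<close>

lemma nn_integral_pair_measure_RN_deriv:
  assumes PW: "sigma_finite_measure PW" and PW': "sigma_finite_measure PW'"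
    and sets_eq: "sets PW = sets PW'" and ac: "absolutely_continuous PW' PW"
    and \<nu>: "sigma_finite_measure \<nu>" and F: "F \<in> borel_measurable (PW \<Otimes>\<^sub>M \<nu>)"
  shows "(\<integral>\<^sup>+z. F z \<partial>(PW \<Otimes>\<^sub>M \<nu>))
    = (\<integral>\<^sup>+w. ennreal (enn2real (RN_deriv PW' PW w)) * (\<integral>\<^sup>+N. F (w, N) \<partial>\<nu>) \<partial>PW')"
proof -
  interpret PW': sigma_finite_measure PW' by (rule PW')
  interpret \<nu>: sigma_finite_measure \<nu> by (rule \<nu>)
  have F': "F \<in> borel_measurable (PW' \<Otimes>\<^sub>M \<nu>)"
    using F by (simp cong: measurable_cong_sets[OF sets_pair_measure_cong[OF sets_eq refl] refl])
  have "(\<integral>\<^sup>+z. F z \<partial>(PW \<Otimes>\<^sub>M \<nu>)) = (\<integral>\<^sup>+w. \<integral>\<^sup>+N. F (w, N) \<partial>\<nu> \<partial>density PW' (RN_deriv PW' PW))"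
    using PW'.density_RN_deriv[OF ac sets_eq] \<nu>.nn_integral_fst[OF F] by simp
  also have "\<dots> = (\<integral>\<^sup>+w. RN_deriv PW' PW w * (\<integral>\<^sup>+N. F (w, N) \<partial>\<nu>) \<partial>PW')"
    by (rule nn_integral_density) (simp_all add: \<nu>.borel_measurable_nn_integral_fst[OF F'])
  also have "\<dots> = (\<integral>\<^sup>+w. ennreal (enn2real (RN_deriv PW' PW w)) * (\<integral>\<^sup>+N. F (w, N) \<partial>\<nu>) \<partial>PW')"
    using PW'.RN_deriv_finite[OF PW ac sets_eq]
    by (intro nn_integral_cong_AE) (auto elim!: eventually_mono simp: ennreal_enn2real_if)
  finally show ?thesis .
qed

text \<open>The hypothesis \<open>shift\<close> says that T w maps the measure with density \<rho> w with respect to \<nu> to \<nu>.\<close>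

lemma distr_pair_measure_eq_distr_density:
  fixes \<rho> :: "'w \<Rightarrow> 'n \<Rightarrow> real" and T :: "'w \<Rightarrow> 'n \<Rightarrow> 'n"
  assumes PW: "sigma_finite_measure PW" and PW': "sigma_finite_measure PW'"
    and sets_eq: "sets PW = sets PW'" and ac: "absolutely_continuous PW' PW"
    and \<nu>: "sigma_finite_measure \<nu>"
    and G: "G \<in> PW \<Otimes>\<^sub>M \<nu> \<rightarrow>\<^sub>M M" and G': "G' \<in> PW' \<Otimes>\<^sub>M \<nu> \<rightarrow>\<^sub>M M"
    and \<rho>: "(\<lambda>z. \<rho> (fst z) (snd z)) \<in> borel_measurable (PW' \<Otimes>\<^sub>M \<nu>)" and \<rho>_nonneg: "\<And>w N. \<rho> w N \<ge> 0"
    and shift: "\<And>w H. w \<in> space PW \<Longrightarrow> H \<in> borel_measurable \<nu> \<Longrightarrow>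
      (\<integral>\<^sup>+N. H (T w N) * ennreal (\<rho> w N) \<partial>\<nu>) = integral\<^sup>N \<nu> H"
    and coupling: "\<And>w N. G (w, T w N) = G' (w, N)"
  shows "distr (PW \<Otimes>\<^sub>M \<nu>) M G
    = distr (density (PW' \<Otimes>\<^sub>M \<nu>) (\<lambda>z. ennreal (enn2real (RN_deriv PW' PW (fst z)) * \<rho> (fst z) (snd z)))) M G'"
proof (rule measure_eqI)
  interpret \<nu>: sigma_finite_measure \<nu> by (rule \<nu>)
  define \<pi> where "\<pi> w = enn2real (RN_deriv PW' PW w)" for w
  define D where "D = density (PW' \<Otimes>\<^sub>M \<nu>) (\<lambda>z. ennreal (\<pi> (fst z) * \<rho> (fst z) (snd z)))"
  have density_meas: "(\<lambda>z. ennreal (\<pi> (fst z) * \<rho> (fst z) (snd z))) \<in> borel_measurable (PW' \<Otimes>\<^sub>M \<nu>)"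
    unfolding \<pi>_def using \<rho> by measurable
  show "sets (distr (PW \<Otimes>\<^sub>M \<nu>) M G) = sets (distr D M G')" by simp
  fix B assume "B \<in> sets (distr (PW \<Otimes>\<^sub>M \<nu>) M G)"
  then have B: "B \<in> sets M" by simp
  have GB: "(\<lambda>z. indicator B (G z) :: ennreal) \<in> borel_measurable (PW \<Otimes>\<^sub>M \<nu>)"
    using G B by measurable
  have G'B: "(\<lambda>z. indicator B (G' z) :: ennreal) \<in> borel_measurable (PW' \<Otimes>\<^sub>M \<nu>)"
    using G' B by measurable
  have "emeasure (distr (PW \<Otimes>\<^sub>M \<nu>) M G) B = (\<integral>\<^sup>+x. indicator B x \<partial>distr (PW \<Otimes>\<^sub>M \<nu>) M G)"
    using B by (simp add: nn_integral_indicator)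
  also have "\<dots> = (\<integral>\<^sup>+z. indicator B (G z) \<partial>(PW \<Otimes>\<^sub>M \<nu>))"
    using B by (intro nn_integral_distr[OF G]) simp
  also have "\<dots> = (\<integral>\<^sup>+w. ennreal (\<pi> w) * (\<integral>\<^sup>+N. indicator B (G (w, N)) \<partial>\<nu>) \<partial>PW')"
    unfolding \<pi>_def by (rule nn_integral_pair_measure_RN_deriv[OF PW PW' sets_eq ac \<nu> GB])
  also have "\<dots> = (\<integral>\<^sup>+w. \<integral>\<^sup>+N. ennreal (\<pi> w * \<rho> w N) * indicator B (G' (w, N)) \<partial>\<nu> \<partial>PW')"
  proof (rule nn_integral_cong)
    fix w assume "w \<in> space PW'"
    then have w: "w \<in> space PW" using sets_eq_imp_space_eq[OF sets_eq] by simp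
    have "(\<lambda>N. indicator B (G (w, N)) :: ennreal) \<in> borel_measurable \<nu>"
      using measurable_compose[OF measurable_Pair1'[OF w] GB] by (simp add: o_def)
    from shift[OF w this]
    have "(\<integral>\<^sup>+N. indicator B (G (w, N)) \<partial>\<nu>) = (\<integral>\<^sup>+N. ennreal (\<rho> w N) * indicator B (G' (w, N)) \<partial>\<nu>)"
      by (simp add: coupling mult.commute)
    moreover have "(\<lambda>N. ennreal (\<rho> w N) * indicator B (G' (w, N))) \<in> borel_measurable \<nu>"
      using measurable_compose[OF measurable_Pair1'[OF \<open>w \<in> space PW'\<close>], of "\<lambda>z. ennreal (\<rho> (fst z) (snd z)) * indicator B (G' z)"] \<rho> G'B
      by (simp add: o_def)
    ultimately show "ennreal (\<pi> w) * (\<integral>\<^sup>+N. indicator B (G (w, N)) \<partial>\<nu>)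
        = (\<integral>\<^sup>+N. ennreal (\<pi> w * \<rho> w N) * indicator B (G' (w, N)) \<partial>\<nu>)"
      using \<rho>_nonneg by (simp add: nn_integral_cmult[symmetric] ennreal_mult \<pi>_def mult.assoc)
  qed
  also have "\<dots> = (\<integral>\<^sup>+z. ennreal (\<pi> (fst z) * \<rho> (fst z) (snd z)) * indicator B (G' z) \<partial>(PW' \<Otimes>\<^sub>M \<nu>))"
    using \<nu>.nn_integral_fst[OF borel_measurable_times_ennreal[OF density_meas G'B]] by simp
  also have "\<dots> = (\<integral>\<^sup>+z. indicator B (G' z) \<partial>D)"
    using density_meas G'B unfolding D_def by (simp add: nn_integral_density)
  also have "\<dots> = (\<integral>\<^sup>+x. indicator B x \<partial>distr D M G')"
    using G' B unfolding D_def by (intro nn_integral_distr[symmetric]) simp_all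
  also have "\<dots> = emeasure (distr D M G') B"
    using B by (simp add: nn_integral_indicator)
  finally show "emeasure (distr (PW \<Otimes>\<^sub>M \<nu>) M G) B = emeasure (distr D M G') B" .
qed

lemma nn_integral_pair_density_powr_le:
  assumes \<nu>: "sigma_finite_measure \<nu>"
    and \<pi>: "\<pi> \<in> borel_measurable M" "\<And>w. \<pi> w \<ge> 0"
    and \<rho>: "(\<lambda>z. \<rho> (fst z) (snd z)) \<in> borel_measurable (M \<Otimes>\<^sub>M \<nu>)" "\<And>w N. \<rho> w N \<ge> 0"
    and bound: "\<And>w. w \<in> space M \<Longrightarrow> (\<integral>\<^sup>+N. ennreal (\<rho> w N powr \<alpha>) \<partial>\<nu>) \<le> K"
  shows "(\<integral>\<^sup>+z. ennreal ((\<pi> (fst z) * \<rho> (fst z) (snd z)) powr \<alpha>) \<partial>(M \<Otimes>\<^sub>M \<nu>))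
    \<le> (\<integral>\<^sup>+w. ennreal (\<pi> w powr \<alpha>) \<partial>M) * K"
proof -
  interpret \<nu>: sigma_finite_measure \<nu> by (rule \<nu>)
  have "(\<integral>\<^sup>+z. ennreal ((\<pi> (fst z) * \<rho> (fst z) (snd z)) powr \<alpha>) \<partial>(M \<Otimes>\<^sub>M \<nu>))
      = (\<integral>\<^sup>+w. \<integral>\<^sup>+N. ennreal (\<pi> w powr \<alpha>) * ennreal (\<rho> w N powr \<alpha>) \<partial>\<nu> \<partial>M)"
    using \<pi> \<rho> by (subst \<nu>.nn_integral_fst[symmetric]) (simp_all add: powr_mult ennreal_mult)
  also have "\<dots> \<le> (\<integral>\<^sup>+w. ennreal (\<pi> w powr \<alpha>) * K \<partial>M)"
  proof (rule nn_integral_mono)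
    fix w assume w: "w \<in> space M"
    have "(\<lambda>N. ennreal (\<rho> w N powr \<alpha>)) \<in> borel_measurable \<nu>"
      using measurable_compose[OF measurable_Pair1'[OF w], of "\<lambda>z. ennreal (\<rho> (fst z) (snd z) powr \<alpha>)"] \<rho>(1)
      by (simp add: o_def)
    then have "(\<integral>\<^sup>+N. ennreal (\<pi> w powr \<alpha>) * ennreal (\<rho> w N powr \<alpha>) \<partial>\<nu>)
        = ennreal (\<pi> w powr \<alpha>) * (\<integral>\<^sup>+N. ennreal (\<rho> w N powr \<alpha>) \<partial>\<nu>)"
      by (rule nn_integral_cmult)
    also have "\<dots> \<le> ennreal (\<pi> w powr \<alpha>) * K"
      by (intro mult_left_mono bound[OF w]) simp
    finally show "(\<integral>\<^sup>+N. ennreal (\<pi> w powr \<alpha>) * ennreal (\<rho> w N powr \<alpha>) \<partial>\<nu>) \<le> ennreal (\<pi> w powr \<alpha>) * K" .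
  qed
  also have "\<dots> = (\<integral>\<^sup>+w. ennreal (\<pi> w powr \<alpha>) \<partial>M) * K"
    using \<pi> by (intro nn_integral_multc) simp
  finally show ?thesis .
qed

lemma nn_integral_PiM_shift:
  fixes M :: "'i \<Rightarrow> 'a measure" and p :: "'i \<Rightarrow> 'a \<Rightarrow> 'a" and q :: "'i \<Rightarrow> 'a \<Rightarrow> real"
  assumes ps: "product_sigma_finite M" and fin: "finite I"
    and p: "\<And>i. i \<in> I \<Longrightarrow> p i \<in> M i \<rightarrow>\<^sub>M M i"
    and q: "\<And>i. i \<in> I \<Longrightarrow> q i \<in> borel_measurable (M i)"
    and q_nonneg: "\<And>i x. q i x \<ge> 0"
    and shift: "\<And>i H. i \<in> I \<Longrightarrow> H \<in> borel_measurable (M i) \<Longrightarrow>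
               (\<integral>\<^sup>+x. H (p i x) * ennreal (q i x) \<partial>M i) = integral\<^sup>N (M i) H"
    and H: "H \<in> borel_measurable (PiM I M)"
  shows "(\<integral>\<^sup>+x. H (\<lambda>i\<in>I. p i (x i)) * ennreal (\<Prod>i\<in>I. q i (x i)) \<partial>PiM I M) = integral\<^sup>N (PiM I M) H"
  using fin H p q shift
proof (induction I arbitrary: H rule: finite_induct)
  case empty
  interpret product_sigma_finite M by (rule ps)
  show ?case by (subst (1 2) nn_integral_empty) (auto simp: restrict_def)
next
  case (insert i I)
  interpret product_sigma_finite M by (rule ps)
  have p_i: "p i \<in> M i \<rightarrow>\<^sub>M M i" and [measurable]: "q i \<in> borel_measurable (M i)"
    using insert.prems by auto
  have H_meas[measurable]: "H \<in> borel_measurable (PiM (insert i I) M)" using insert.prems by simp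
  have shift_meas: "(\<lambda>x. \<lambda>j\<in>J. p j (x j)) \<in> PiM J M \<rightarrow>\<^sub>M PiM J M" if "J \<subseteq> insert i I" for J
    using that insert.prems(2)
    by (intro measurable_restrict measurable_compose[OF measurable_component_singleton]) auto
  have prod_meas: "(\<lambda>x. \<Prod>j\<in>J. q j (x j)) \<in> borel_measurable (PiM J M)" if "J \<subseteq> insert i I" for J
    using that insert.prems(3)
    by (intro borel_measurable_prod measurable_compose[OF measurable_component_singleton]) auto
  define G where "G z = (\<integral>\<^sup>+y. H (z(i := y)) \<partial>M i)" for z
  have G_meas: "G \<in> borel_measurable (PiM I M)"
    unfolding G_def
  proof (rule sigma_finite_measure.borel_measurable_nn_integral)
    show "sigma_finite_measure (M i)" by (rule sigma_finite_measures)
    show "(\<lambda>(z, y). H (z(i := y))) \<in> borel_measurable (PiM I M \<Otimes>\<^sub>M M i)"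
      by measurable
  qed
  have "(\<integral>\<^sup>+x. H (\<lambda>j\<in>insert i I. p j (x j)) * ennreal (\<Prod>j\<in>insert i I. q j (x j)) \<partial>PiM (insert i I) M)
      = (\<integral>\<^sup>+x. (\<integral>\<^sup>+y. H (\<lambda>j\<in>insert i I. p j ((x(i := y)) j)) * ennreal (\<Prod>j\<in>insert i I. q j ((x(i := y)) j)) \<partial>M i) \<partial>PiM I M)"
  proof (rule product_nn_integral_insert)
    show "finite I" "i \<notin> I" by fact+
    show "(\<lambda>x. H (\<lambda>j\<in>insert i I. p j (x j)) * ennreal (\<Prod>j\<in>insert i I. q j (x j))) \<in> borel_measurable (PiM (insert i I) M)"
      using shift_meas[of "insert i I"] prod_meas[of "insert i I"] by (intro borel_measurable_times_ennreal measurable_compose[OF _ H_meas] measurable_compose[OF _ measurable_ennreal]) auto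
  qed
  also have "\<dots> = (\<integral>\<^sup>+x. G (\<lambda>j\<in>I. p j (x j)) * ennreal (\<Prod>j\<in>I. q j (x j)) \<partial>PiM I M)"
  proof (rule nn_integral_cong)
    fix x assume x: "x \<in> space (PiM I M)"
    define z where "z = (\<lambda>j\<in>I. p j (x j))"
    have z: "z \<in> space (PiM I M)" unfolding z_def using measurable_space[OF shift_meas[of I] x] by auto
    have H_upd_meas[measurable]: "(\<lambda>y. H (z(i := y))) \<in> borel_measurable (M i)"
      using measurable_comp[OF measurable_component_update[OF z insert.hyps(2)] H_meas] by (simp add: comp_def)
    have [measurable]: "(\<lambda>y. H (z(i := p i y))) \<in> borel_measurable (M i)"
      using measurable_comp[OF p_i H_upd_meas] by (simp add: comp_def)
    have restrict_upd: "(\<lambda>j\<in>insert i I. p j ((x(i := y)) j)) = (\<lambda>j\<in>I. p j (x j))(i := p i y)" for y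
      using insert.hyps by (auto simp: fun_eq_iff)
    have prod_upd: "(\<Prod>j\<in>insert i I. q j ((x(i := y)) j)) = q i y * (\<Prod>j\<in>I. q j (x j))" for y
      using insert.hyps by (auto intro!: prod.cong)
    have "(\<integral>\<^sup>+y. H (\<lambda>j\<in>insert i I. p j ((x(i := y)) j)) * ennreal (\<Prod>j\<in>insert i I. q j ((x(i := y)) j)) \<partial>M i)
        = (\<integral>\<^sup>+y. (H ((\<lambda>j\<in>I. p j (x j))(i := p i y)) * ennreal (q i y)) * ennreal (\<Prod>j\<in>I. q j (x j)) \<partial>M i)"
      using restrict_upd prod_upd q_nonneg by (intro nn_integral_cong) (simp add: ennreal_mult prod_nonneg mult_ac)
    also have "\<dots> = (\<integral>\<^sup>+y. H ((\<lambda>j\<in>I. p j (x j))(i := p i y)) * ennreal (q i y) \<partial>M i) * ennreal (\<Prod>j\<in>I. q j (x j))"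
      unfolding z_def[symmetric] by (rule nn_integral_multc) simp
    also have "(\<integral>\<^sup>+y. H ((\<lambda>j\<in>I. p j (x j))(i := p i y)) * ennreal (q i y) \<partial>M i) = G (\<lambda>j\<in>I. p j (x j))"
      unfolding G_def z_def[symmetric] using insert.prems(4)[of i "\<lambda>y. H (z(i := y))"] by simp
    finally show "(\<integral>\<^sup>+y. H (\<lambda>j\<in>insert i I. p j ((x(i := y)) j)) * ennreal (\<Prod>j\<in>insert i I. q j ((x(i := y)) j)) \<partial>M i)
        = G (\<lambda>j\<in>I. p j (x j)) * ennreal (\<Prod>j\<in>I. q j (x j))" .
  qed
  also have "\<dots> = integral\<^sup>N (PiM I M) G"
    by (rule insert.IH[OF G_meas]) (use insert.prems in auto)
  also have "\<dots> = integral\<^sup>N (PiM (insert i I) M) H"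
    unfolding G_def by (rule product_nn_integral_insert[symmetric]) (use insert.hyps in auto)
  finally show ?case .
qed

text \<open>The shift of layer l depends only on the layers below l (hypothesis \<open>c_causal\<close>), so the
  top layer can be integrated out first, for fixed lower layers.\<close>

lemma nn_integral_adaptive_shift:
  fixes M0 :: "'a measure" and p :: "'a \<Rightarrow> 'b \<Rightarrow> 'a" and q :: "'b \<Rightarrow> 'a \<Rightarrow> real"
    and c :: "nat \<Rightarrow> (nat \<Rightarrow> 'a) \<Rightarrow> 'b"
  assumes M0: "sigma_finite_measure M0"
    and shift: "\<And>b H. H \<in> borel_measurable M0 \<Longrightarrow> (\<integral>\<^sup>+x. H (p x b) * ennreal (q b x) \<partial>M0) = integral\<^sup>N M0 H"
    and q_nonneg: "\<And>b x. q b x \<ge> 0"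
    and c_causal: "\<And>l N N'. (\<And>k. k < l \<Longrightarrow> N k = N' k) \<Longrightarrow> c l N = c l N'"
    and p_meas: "\<And>L l. l < L \<Longrightarrow> (\<lambda>N. p (N l) (c l N)) \<in> PiM {..<L} (\<lambda>_. M0) \<rightarrow>\<^sub>M M0"
    and q_meas: "\<And>L l. l < L \<Longrightarrow> (\<lambda>N. q (c l N) (N l)) \<in> borel_measurable (PiM {..<L} (\<lambda>_. M0))"
    and H: "H \<in> borel_measurable (PiM {..<L} (\<lambda>_. M0))"
  shows "(\<integral>\<^sup>+N. H (\<lambda>l\<in>{..<L}. p (N l) (c l N)) * ennreal (\<Prod>l<L. q (c l N) (N l)) \<partial>PiM {..<L} (\<lambda>_. M0))
         = integral\<^sup>N (PiM {..<L} (\<lambda>_. M0)) H"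
  using H
proof (induction L arbitrary: H)
  case 0
  interpret product_sigma_finite "\<lambda>_. M0" using M0 by (simp add: product_sigma_finite_def)
  show ?case unfolding lessThan_0 by (subst (1 2) nn_integral_empty) (auto simp: restrict_def)
next
  case (Suc L)
  interpret product_sigma_finite "\<lambda>_. M0" using M0 by (simp add: product_sigma_finite_def)
  interpret M0: sigma_finite_measure M0 by (rule M0)
  have ins: "{..<Suc L} = insert L {..<L}" by auto
  have H_meas[measurable]: "H \<in> borel_measurable (PiM (insert L {..<L}) (\<lambda>_. M0))" using Suc.prems ins by simp
  have shift_meas: "(\<lambda>N. \<lambda>l\<in>{..<L'}. p (N l) (c l N)) \<in> PiM {..<L'} (\<lambda>_. M0) \<rightarrow>\<^sub>M PiM {..<L'} (\<lambda>_. M0)" for L'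
    by (intro measurable_restrict p_meas) auto
  have prod_meas: "(\<lambda>N. \<Prod>l<L'. q (c l N) (N l)) \<in> borel_measurable (PiM {..<L'} (\<lambda>_. M0))" for L'
    by (intro borel_measurable_prod q_meas) auto
  define G where "G z = (\<integral>\<^sup>+y. H (z(L := y)) \<partial>M0)" for z
  have G_meas: "G \<in> borel_measurable (PiM {..<L} (\<lambda>_. M0))"
    unfolding G_def
  proof (rule sigma_finite_measure.borel_measurable_nn_integral)
    show "sigma_finite_measure M0" by (rule M0)
    show "(\<lambda>(z, y). H (z(L := y))) \<in> borel_measurable (PiM {..<L} (\<lambda>_. M0) \<Otimes>\<^sub>M M0)"
      by measurable
  qed
  have "(\<integral>\<^sup>+N. H (\<lambda>l\<in>{..<Suc L}. p (N l) (c l N)) * ennreal (\<Prod>l<Suc L. q (c l N) (N l)) \<partial>PiM {..<Suc L} (\<lambda>_. M0))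
      = (\<integral>\<^sup>+x. (\<integral>\<^sup>+y. H (\<lambda>l\<in>{..<Suc L}. p ((x(L := y)) l) (c l (x(L := y))))
            * ennreal (\<Prod>l<Suc L. q (c l (x(L := y))) ((x(L := y)) l)) \<partial>M0) \<partial>PiM {..<L} (\<lambda>_. M0))"
    unfolding ins
  proof (rule product_nn_integral_insert)
    show "(\<lambda>N. H (\<lambda>l\<in>insert L {..<L}. p (N l) (c l N)) * ennreal (\<Prod>l\<in>insert L {..<L}. q (c l N) (N l)))
        \<in> borel_measurable (PiM (insert L {..<L}) (\<lambda>_. M0))"
      using shift_meas[of "Suc L"] prod_meas[of "Suc L"] unfolding ins
      by (intro borel_measurable_times_ennreal measurable_compose[OF _ H_meas] measurable_compose[OF _ measurable_ennreal]) auto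
  qed auto
  also have "\<dots> = (\<integral>\<^sup>+x. G (\<lambda>l\<in>{..<L}. p (x l) (c l x)) * ennreal (\<Prod>l<L. q (c l x) (x l)) \<partial>PiM {..<L} (\<lambda>_. M0))"
  proof (rule nn_integral_cong)
    fix x assume x: "x \<in> space (PiM {..<L} (\<lambda>_. M0))"
    define z where "z = (\<lambda>l\<in>{..<L}. p (x l) (c l x))"
    have z: "z \<in> space (PiM {..<L} (\<lambda>_. M0))" unfolding z_def using measurable_space[OF shift_meas[of L] x] by auto
    have c_upd: "c l (x(L := y)) = c l x" if "l \<le> L" for l y
      using that by (intro c_causal) auto
    have H_upd_meas[measurable]: "(\<lambda>y. H (z(L := y))) \<in> borel_measurable M0"
      using measurable_comp[OF measurable_component_update[OF z] H_meas] by (simp add: comp_def)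
    have p_meas_x: "(\<lambda>y. p y (c L x)) \<in> M0 \<rightarrow>\<^sub>M M0"
    proof -
      have "(\<lambda>N. p (N L) (c L N)) \<in> PiM (insert L {..<L}) (\<lambda>_. M0) \<rightarrow>\<^sub>M M0" using p_meas[of L "Suc L"] ins by simp
      from measurable_comp[OF measurable_component_update[OF x] this]
      show ?thesis using c_upd[of L] by (simp add: comp_def)
    qed
    have [measurable]: "(\<lambda>y. q (c L x) y) \<in> borel_measurable M0"
    proof -
      have "(\<lambda>N. q (c L N) (N L)) \<in> borel_measurable (PiM (insert L {..<L}) (\<lambda>_. M0))" using q_meas[of L "Suc L"] ins by simp
      from measurable_comp[OF measurable_component_update[OF x] this]
      show ?thesis using c_upd[of L] by (simp add: comp_def)
    qed
    have [measurable]: "(\<lambda>y. H (z(L := p y (c L x)))) \<in> borel_measurable M0"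
      using measurable_comp[OF p_meas_x H_upd_meas] by (simp add: comp_def)
    have restrict_upd: "(\<lambda>l\<in>{..<Suc L}. p ((x(L := y)) l) (c l (x(L := y)))) = z(L := p y (c L x))" for y
      unfolding z_def using c_upd by (auto simp: fun_eq_iff)
    have prod_upd: "(\<Prod>l<Suc L. q (c l (x(L := y))) ((x(L := y)) l)) = q (c L x) y * (\<Prod>l<L. q (c l x) (x l))" for y
      using c_upd by (auto simp: prod.lessThan_Suc mult.commute intro!: prod.cong)
    have "(\<integral>\<^sup>+y. H (\<lambda>l\<in>{..<Suc L}. p ((x(L := y)) l) (c l (x(L := y))))
            * ennreal (\<Prod>l<Suc L. q (c l (x(L := y))) ((x(L := y)) l)) \<partial>M0)
        = (\<integral>\<^sup>+y. (H (z(L := p y (c L x))) * ennreal (q (c L x) y)) * ennreal (\<Prod>l<L. q (c l x) (x l)) \<partial>M0)"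
      using restrict_upd prod_upd q_nonneg by (intro nn_integral_cong) (simp add: ennreal_mult prod_nonneg mult_ac)
    also have "\<dots> = (\<integral>\<^sup>+y. H (z(L := p y (c L x))) * ennreal (q (c L x) y) \<partial>M0) * ennreal (\<Prod>l<L. q (c l x) (x l))"
      by (rule nn_integral_multc) simp
    also have "(\<integral>\<^sup>+y. H (z(L := p y (c L x))) * ennreal (q (c L x) y) \<partial>M0) = G z"
      unfolding G_def using shift[of "\<lambda>y. H (z(L := y))" "c L x"] by simp
    finally show "(\<integral>\<^sup>+y. H (\<lambda>l\<in>{..<Suc L}. p ((x(L := y)) l) (c l (x(L := y))))
            * ennreal (\<Prod>l<Suc L. q (c l (x(L := y))) ((x(L := y)) l)) \<partial>M0)
        = G (\<lambda>l\<in>{..<L}. p (x l) (c l x)) * ennreal (\<Prod>l<L. q (c l x) (x l))"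
      unfolding z_def .
  qed
  also have "\<dots> = integral\<^sup>N (PiM {..<L} (\<lambda>_. M0)) G"
    by (rule Suc.IH[OF G_meas])
  also have "\<dots> = integral\<^sup>N (PiM {..<Suc L} (\<lambda>_. M0)) H"
    unfolding G_def ins by (rule product_nn_integral_insert[symmetric]) auto
  finally show ?case .
qed

lemma nn_integral_adaptive_prod_powr_le:
  fixes M0 :: "'a measure" and q :: "'b \<Rightarrow> 'a \<Rightarrow> real"
    and c :: "nat \<Rightarrow> (nat \<Rightarrow> 'a) \<Rightarrow> 'b" and B :: ennreal
  assumes M0: "sigma_finite_measure M0"
    and q_nonneg: "\<And>b x. q b x \<ge> 0"
    and c_causal: "\<And>l N N'. (\<And>k. k < l \<Longrightarrow> N k = N' k) \<Longrightarrow> c l N = c l N'"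
    and q_meas: "\<And>L l. l < L \<Longrightarrow> (\<lambda>N. q (c l N) (N l)) \<in> borel_measurable (PiM {..<L} (\<lambda>_. M0))"
    and Bnd: "\<And>l N. (\<integral>\<^sup>+y. ennreal (q (c l N) y powr \<alpha>) \<partial>M0) \<le> B"
  shows "(\<integral>\<^sup>+N. ennreal ((\<Prod>l<L. q (c l N) (N l)) powr \<alpha>) \<partial>PiM {..<L} (\<lambda>_. M0)) \<le> B ^ L"
proof (induction L)
  case 0
  interpret product_sigma_finite "\<lambda>_. M0" using M0 by (simp add: product_sigma_finite_def)
  show ?case unfolding lessThan_0 by (subst nn_integral_empty) auto
next
  case (Suc L)
  interpret product_sigma_finite "\<lambda>_. M0" using M0 by (simp add: product_sigma_finite_def)
  have ins: "{..<Suc L} = insert L {..<L}" by auto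
  have prod_meas: "(\<lambda>N. \<Prod>l<L'. q (c l N) (N l)) \<in> borel_measurable (PiM {..<L'} (\<lambda>_. M0))" for L'
    by (intro borel_measurable_prod q_meas) auto
  have "(\<integral>\<^sup>+N. ennreal ((\<Prod>l<Suc L. q (c l N) (N l)) powr \<alpha>) \<partial>PiM {..<Suc L} (\<lambda>_. M0))
      = (\<integral>\<^sup>+x. (\<integral>\<^sup>+y. ennreal ((\<Prod>l<Suc L. q (c l (x(L := y))) ((x(L := y)) l)) powr \<alpha>) \<partial>M0) \<partial>PiM {..<L} (\<lambda>_. M0))"
    unfolding ins
  proof (rule product_nn_integral_insert)
    show "(\<lambda>N. ennreal ((\<Prod>l\<in>insert L {..<L}. q (c l N) (N l)) powr \<alpha>)) \<in> borel_measurable (PiM (insert L {..<L}) (\<lambda>_. M0))"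
      using prod_meas[of "Suc L"] unfolding ins by measurable
  qed auto
  also have "\<dots> \<le> (\<integral>\<^sup>+x. ennreal ((\<Prod>l<L. q (c l x) (x l)) powr \<alpha>) * B \<partial>PiM {..<L} (\<lambda>_. M0))"
  proof (rule nn_integral_mono)
    fix x assume x: "x \<in> space (PiM {..<L} (\<lambda>_. M0))"
    have c_upd: "c l (x(L := y)) = c l x" if "l \<le> L" for l y
      using that by (intro c_causal) auto
    have [measurable]: "(\<lambda>y. q (c L x) y) \<in> borel_measurable M0"
    proof -
      have "(\<lambda>N. q (c L N) (N L)) \<in> borel_measurable (PiM (insert L {..<L}) (\<lambda>_. M0))" using q_meas[of L "Suc L"] ins by simp
      from measurable_comp[OF measurable_component_update[OF x] this]
      show ?thesis using c_upd[of L] by (simp add: comp_def)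
    qed
    have "(\<integral>\<^sup>+y. ennreal ((\<Prod>l<Suc L. q (c l (x(L := y))) ((x(L := y)) l)) powr \<alpha>) \<partial>M0)
        = (\<integral>\<^sup>+y. ennreal ((\<Prod>l<L. q (c l x) (x l)) powr \<alpha>) * ennreal (q (c L x) y powr \<alpha>) \<partial>M0)"
    proof (intro nn_integral_cong)
      fix y
      have prod_upd: "(\<Prod>l<Suc L. q (c l (x(L := y))) ((x(L := y)) l)) = (\<Prod>l<L. q (c l x) (x l)) * q (c L x) y"
        using c_upd by (auto simp: prod.lessThan_Suc intro!: prod.cong)
      show "ennreal ((\<Prod>l<Suc L. q (c l (x(L := y))) ((x(L := y)) l)) powr \<alpha>)
          = ennreal ((\<Prod>l<L. q (c l x) (x l)) powr \<alpha>) * ennreal (q (c L x) y powr \<alpha>)"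
        unfolding prod_upd using q_nonneg by (simp add: powr_mult prod_nonneg ennreal_mult')
    qed
    also have "\<dots> = ennreal ((\<Prod>l<L. q (c l x) (x l)) powr \<alpha>) * (\<integral>\<^sup>+y. ennreal (q (c L x) y powr \<alpha>) \<partial>M0)"
      by (rule nn_integral_cmult) simp
    also have "\<dots> \<le> ennreal ((\<Prod>l<L. q (c l x) (x l)) powr \<alpha>) * B"
      by (intro mult_left_mono Bnd) simp
    finally show "(\<integral>\<^sup>+y. ennreal ((\<Prod>l<Suc L. q (c l (x(L := y))) ((x(L := y)) l)) powr \<alpha>) \<partial>M0)
        \<le> ennreal ((\<Prod>l<L. q (c l x) (x l)) powr \<alpha>) * B" .
  qed
  also have "\<dots> = (\<integral>\<^sup>+x. ennreal ((\<Prod>l<L. q (c l x) (x l)) powr \<alpha>) \<partial>PiM {..<L} (\<lambda>_. M0)) * B"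
    using prod_meas[of L] by (intro nn_integral_multc measurable_compose[OF _ measurable_ennreal] powr_real_measurable) auto
  also have "\<dots> \<le> B ^ L * B" by (intro mult_right_mono Suc.IH) simp
  finally show ?case by (simp add: mult.commute)
qed

section \<open>Shifted Gaussian noise\<close>

definition centered_normal :: "real \<Rightarrow> real measure" where
  "centered_normal s = density lborel (normal_density 0 s)"

definition normal_shift_ratio :: "real \<Rightarrow> real \<Rightarrow> real \<Rightarrow> real" where
  "normal_shift_ratio s x c = normal_density 0 s (x + c) / normal_density 0 s x"

lemma prob_space_centered_normal: "s > 0 \<Longrightarrow> prob_space (centered_normal s)"
  unfolding centered_normal_def by (rule prob_space_normal_density)

lemma sets_centered_normal[simp, measurable_cong]: "sets (centered_normal s) = sets borel"
  unfolding centered_normal_def by simp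

lemma normal_shift_ratio_nonneg: "normal_shift_ratio s x c \<ge> 0"
  unfolding normal_shift_ratio_def by simp

lemma borel_measurable_normal_shift_ratio[measurable (raw)]:
  assumes "a \<in> borel_measurable M" "b \<in> borel_measurable M"
  shows "(\<lambda>x. normal_shift_ratio s (a x) (b x)) \<in> borel_measurable M"
  unfolding normal_shift_ratio_def using assms by measurable

lemma nn_integral_normal_density:
  assumes "\<sigma> > 0" shows "(\<integral>\<^sup>+x. ennreal (normal_density \<mu> \<sigma> x) \<partial>lborel) = 1"
proof -
  interpret prob_space "density lborel (normal_density \<mu> \<sigma>)" using assms by (rule prob_space_normal_density)
  have "emeasure (density lborel (normal_density \<mu> \<sigma>)) UNIV = 1"
    using emeasure_space_1 by simp
  then show ?thesis by (simp add: emeasure_density)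
qed

lemma nn_integral_centered_normal_shift:
  fixes H :: "real \<Rightarrow> ennreal" and s c :: real
  assumes s: "s > 0" and H[measurable]: "H \<in> borel_measurable borel"
  shows "(\<integral>\<^sup>+x. H (x + c) * ennreal (normal_shift_ratio s x c) \<partial>centered_normal s) = integral\<^sup>N (centered_normal s) H"
proof -
  let ?\<phi> = "normal_density 0 s"
  have "(\<integral>\<^sup>+x. H (x + c) * ennreal (?\<phi> (x + c) / ?\<phi> x) \<partial>density lborel ?\<phi>)
      = (\<integral>\<^sup>+x. ennreal (?\<phi> x) * (H (x + c) * ennreal (?\<phi> (x + c) / ?\<phi> x)) \<partial>lborel)"
    by (simp add: nn_integral_density normal_density_nonneg)
  also have "\<dots> = (\<integral>\<^sup>+x. (\<lambda>y. H y * ennreal (?\<phi> y)) (c + x) \<partial>lborel)"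
  proof (intro nn_integral_cong)
    fix x
    have "?\<phi> x > 0" using s by (rule normal_density_pos)
    then have "ennreal (?\<phi> x) * ennreal (?\<phi> (x + c) / ?\<phi> x) = ennreal (?\<phi> (x + c))"
      by (simp add: ennreal_mult'[symmetric] normal_density_nonneg)
    then show "ennreal (?\<phi> x) * (H (x + c) * ennreal (?\<phi> (x + c) / ?\<phi> x)) = (\<lambda>y. H y * ennreal (?\<phi> y)) (c + x)"
      by (simp add: add.commute mult_ac)
  qed
  also have "\<dots> = (\<integral>\<^sup>+y. H y * ennreal (?\<phi> y) \<partial>distr lborel borel ((+) c))"
    by (simp add: nn_integral_distr)
  also have "\<dots> = (\<integral>\<^sup>+y. H y * ennreal (?\<phi> y) \<partial>lborel)"
    by (simp add: lborel_distr_plus)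
  also have "\<dots> = (\<integral>\<^sup>+x. H x \<partial>density lborel ?\<phi>)"
    by (simp add: nn_integral_density normal_density_nonneg mult.commute)
  finally show ?thesis unfolding centered_normal_def normal_shift_ratio_def .
qed

lemma normal_density_ratio_powr:
  fixes s c \<alpha> x :: real
  assumes s: "s > 0"
  shows "normal_density 0 s x * (normal_density 0 s (x + c) / normal_density 0 s x) powr \<alpha>
       = exp (\<alpha> * (\<alpha> - 1) * c\<^sup>2 / (2 * s\<^sup>2)) * normal_density (- (\<alpha> * c)) s x"
proof -
  define C where "C = 1 / sqrt (2 * pi * s\<^sup>2)"
  have C: "C > 0" unfolding C_def using s by simp
  have r: "normal_density 0 s (x + c) / normal_density 0 s x = exp (- (2 * x * c + c\<^sup>2) / (2 * s\<^sup>2))"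
    unfolding normal_density_def C_def[symmetric] using C s
    by (simp add: exp_diff[symmetric] power2_eq_square field_simps)
  have "normal_density 0 s x * (normal_density 0 s (x + c) / normal_density 0 s x) powr \<alpha>
      = C * exp (- x\<^sup>2 / (2 * s\<^sup>2)) * exp (\<alpha> * (- (2 * x * c + c\<^sup>2) / (2 * s\<^sup>2)))"
    unfolding r by (simp add: powr_def normal_density_def C_def field_simps)
  also have "\<dots> = C * exp (- x\<^sup>2 / (2 * s\<^sup>2) + \<alpha> * (- (2 * x * c + c\<^sup>2) / (2 * s\<^sup>2)))"
    by (simp only: exp_add mult.assoc)
  also have "- x\<^sup>2 / (2 * s\<^sup>2) + \<alpha> * (- (2 * x * c + c\<^sup>2) / (2 * s\<^sup>2))
      = \<alpha> * (\<alpha> - 1) * c\<^sup>2 / (2 * s\<^sup>2) + (- (x - - (\<alpha> * c))\<^sup>2 / (2 * s\<^sup>2))"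
    using s by (simp add: field_simps power2_eq_square)
  also have "C * exp (\<alpha> * (\<alpha> - 1) * c\<^sup>2 / (2 * s\<^sup>2) + (- (x - - (\<alpha> * c))\<^sup>2 / (2 * s\<^sup>2)))
      = exp (\<alpha> * (\<alpha> - 1) * c\<^sup>2 / (2 * s\<^sup>2)) * normal_density (- (\<alpha> * c)) s x"
    unfolding normal_density_def C_def[symmetric] by (simp only: exp_add mult_ac)
  finally show ?thesis .
qed

lemma nn_integral_normal_shift_ratio_powr:
  fixes s c \<alpha> :: real
  assumes s: "s > 0"
  shows "(\<integral>\<^sup>+x. ennreal (normal_shift_ratio s x c powr \<alpha>) \<partial>centered_normal s)
    = ennreal (exp (\<alpha> * (\<alpha> - 1) * c\<^sup>2 / (2 * s\<^sup>2)))"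
proof -
  have "(\<integral>\<^sup>+x. ennreal ((normal_density 0 s (x + c) / normal_density 0 s x) powr \<alpha>)
            \<partial>density lborel (normal_density 0 s))
      = (\<integral>\<^sup>+x. ennreal (exp (\<alpha> * (\<alpha> - 1) * c\<^sup>2 / (2 * s\<^sup>2))) * ennreal (normal_density (- (\<alpha> * c)) s x) \<partial>lborel)"
    by (simp add: nn_integral_density normal_density_nonneg ennreal_mult'[symmetric] normal_density_ratio_powr[OF s])
  also have "\<dots> = ennreal (exp (\<alpha> * (\<alpha> - 1) * c\<^sup>2 / (2 * s\<^sup>2)))"
    using s by (simp add: nn_integral_cmult nn_integral_normal_density)
  finally show ?thesis unfolding centered_normal_def normal_shift_ratio_def .
qed

definition noise_layer :: "nat \<Rightarrow> real \<Rightarrow> (nat \<Rightarrow> 'd::finite \<Rightarrow> real) measure" where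
  "noise_layer n s = PiM {..<n} (\<lambda>i. PiM UNIV (\<lambda>d::'d. centered_normal s))"

definition shift_noise_layer :: "nat \<Rightarrow> (nat \<Rightarrow> 'd::finite \<Rightarrow> real) \<Rightarrow> (nat \<Rightarrow> 'd \<Rightarrow> real) \<Rightarrow> (nat \<Rightarrow> 'd \<Rightarrow> real)" where
  "shift_noise_layer n x c = (\<lambda>i\<in>{..<n}. \<lambda>d\<in>UNIV. x i d + c i d)"

definition shift_noise_layer_density :: "real \<Rightarrow> nat \<Rightarrow> (nat \<Rightarrow> 'd::finite \<Rightarrow> real) \<Rightarrow> (nat \<Rightarrow> 'd \<Rightarrow> real) \<Rightarrow> real" where
  "shift_noise_layer_density s n c x = (\<Prod>i<n. \<Prod>d\<in>UNIV. normal_shift_ratio s (x i d) (c i d))"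

lemma shift_noise_layer_density_nonneg: "shift_noise_layer_density s n c x \<ge> 0"
  unfolding shift_noise_layer_density_def by (intro prod_nonneg normal_shift_ratio_nonneg)

lemma prob_space_noise_row: "s > 0 \<Longrightarrow> prob_space (PiM UNIV (\<lambda>d::'d::finite. centered_normal s))"
  by (intro prob_space_PiM prob_space_centered_normal)

lemma prob_space_noise_layer: "s > 0 \<Longrightarrow> prob_space (noise_layer n s :: (nat \<Rightarrow> 'd::finite \<Rightarrow> real) measure)"
  unfolding noise_layer_def by (intro prob_space_PiM prob_space_noise_row)

lemma measurable_noise_row_component[measurable]: "(\<lambda>x. x d) \<in> borel_measurable (PiM UNIV (\<lambda>d::'d::finite. centered_normal s))"
  using measurable_component_singleton[of d UNIV "\<lambda>d::'d. centered_normal s"] by (simp cong: measurable_cong_sets)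

lemma nn_integral_noise_row_shift:
  fixes c :: "'d::finite \<Rightarrow> real"
  assumes s: "s > 0" and H: "H \<in> borel_measurable (PiM UNIV (\<lambda>d::'d. centered_normal s))"
  shows "(\<integral>\<^sup>+x. H (\<lambda>d\<in>UNIV. x d + c d) * ennreal (\<Prod>d\<in>UNIV. normal_shift_ratio s (x d) (c d)) \<partial>PiM UNIV (\<lambda>d::'d. centered_normal s))
       = integral\<^sup>N (PiM UNIV (\<lambda>d::'d. centered_normal s)) H"
proof (rule nn_integral_PiM_shift[where p = "\<lambda>d x. x + c d" and q = "\<lambda>d x. normal_shift_ratio s x (c d)", OF _ _ _ _ _ _ H])
  show "product_sigma_finite (\<lambda>d::'d. centered_normal s)"
    unfolding product_sigma_finite_def using prob_space_centered_normal[OF s] by (simp add: prob_space_imp_sigma_finite)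
  show "(\<integral>\<^sup>+x. G (x + c d) * ennreal (normal_shift_ratio s x (c d)) \<partial>centered_normal s) = integral\<^sup>N (centered_normal s) G"
    if "G \<in> borel_measurable (centered_normal s)" for d G
    using that by (intro nn_integral_centered_normal_shift[OF s]) simp
  show "(\<lambda>x. x + c d) \<in> centered_normal s \<rightarrow>\<^sub>M centered_normal s" for d
    by (simp cong: measurable_cong_sets)
  show "(\<lambda>x. normal_shift_ratio s x (c d)) \<in> borel_measurable (centered_normal s)" for d
    by (subst measurable_cong_sets[OF sets_centered_normal refl]) measurable
qed (simp_all add: normal_shift_ratio_nonneg)

lemma nn_integral_noise_layer_shift:
  fixes c :: "nat \<Rightarrow> 'd::finite \<Rightarrow> real"
  assumes s: "s > 0" and H: "H \<in> borel_measurable (noise_layer n s :: (nat \<Rightarrow> 'd \<Rightarrow> real) measure)"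
  shows "(\<integral>\<^sup>+x. H (shift_noise_layer n x c) * ennreal (shift_noise_layer_density s n c x) \<partial>noise_layer n s) = integral\<^sup>N (noise_layer n s) H"
  unfolding shift_noise_layer_def shift_noise_layer_density_def noise_layer_def
proof (rule nn_integral_PiM_shift[where p = "\<lambda>i x. \<lambda>d\<in>UNIV. x d + c i d" and q = "\<lambda>i x. \<Prod>d\<in>UNIV. normal_shift_ratio s (x d) (c i d)"])
  show "product_sigma_finite (\<lambda>i. PiM UNIV (\<lambda>d::'d. centered_normal s))"
    unfolding product_sigma_finite_def using prob_space_imp_sigma_finite[OF prob_space_noise_row[OF s]] by simp
  show "(\<lambda>x. \<lambda>d\<in>UNIV. x d + c i d) \<in> PiM UNIV (\<lambda>d::'d. centered_normal s) \<rightarrow>\<^sub>M PiM UNIV (\<lambda>d::'d. centered_normal s)" for i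
    by (intro measurable_restrict) (simp cong: measurable_cong_sets, measurable)
  show "(\<lambda>x. \<Prod>d\<in>UNIV. normal_shift_ratio s (x d) (c i d)) \<in> borel_measurable (PiM UNIV (\<lambda>d::'d. centered_normal s))" for i
    unfolding normal_shift_ratio_def by (intro borel_measurable_prod) (simp cong: measurable_cong_sets)
  show "(\<Prod>d\<in>UNIV. normal_shift_ratio s (x d) (c i d)) \<ge> 0" for i x
    by (intro prod_nonneg normal_shift_ratio_nonneg)
  show "(\<integral>\<^sup>+x. G (\<lambda>d\<in>UNIV. x d + c i d) * ennreal (\<Prod>d\<in>UNIV. normal_shift_ratio s (x d) (c i d)) \<partial>PiM UNIV (\<lambda>d::'d. centered_normal s))
      = integral\<^sup>N (PiM UNIV (\<lambda>d::'d. centered_normal s)) G"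
    if "G \<in> borel_measurable (PiM UNIV (\<lambda>d::'d. centered_normal s))" for i G
    by (rule nn_integral_noise_row_shift[OF s that])
  show "H \<in> borel_measurable (PiM {..<n} (\<lambda>i. PiM UNIV (\<lambda>d::'d. centered_normal s)))" using H unfolding noise_layer_def .
qed simp

lemma nn_integral_shift_noise_layer_density_powr:
  fixes c :: "nat \<Rightarrow> 'd::finite \<Rightarrow> real"
  assumes s: "s > 0"
  shows "(\<integral>\<^sup>+x. ennreal (shift_noise_layer_density s n c x powr \<alpha>) \<partial>(noise_layer n s :: (nat \<Rightarrow> 'd \<Rightarrow> real) measure))
       = ennreal (exp (\<Sum>i<n. \<Sum>d\<in>UNIV. \<alpha> * (\<alpha> - 1) * (c i d)\<^sup>2 / (2 * s\<^sup>2)))"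
proof -
  interpret O: product_sigma_finite "\<lambda>i. PiM UNIV (\<lambda>d::'d. centered_normal s)"
    unfolding product_sigma_finite_def using prob_space_imp_sigma_finite[OF prob_space_noise_row[OF s]] by simp
  interpret I: product_sigma_finite "\<lambda>d::'d. centered_normal s"
    unfolding product_sigma_finite_def using prob_space_centered_normal[OF s] by (simp add: prob_space_imp_sigma_finite)
  have rm: "(\<lambda>z. ennreal (normal_shift_ratio s z b powr \<alpha>)) \<in> borel_measurable (centered_normal s)" for b
    by (subst measurable_cong_sets[OF sets_centered_normal refl]) measurable
  have "(\<integral>\<^sup>+x. ennreal (shift_noise_layer_density s n c x powr \<alpha>) \<partial>(noise_layer n s :: (nat \<Rightarrow> 'd \<Rightarrow> real) measure))
      = (\<integral>\<^sup>+x. (\<Prod>i<n. (\<lambda>i y. \<Prod>d\<in>UNIV. ennreal (normal_shift_ratio s (y d) (c i d) powr \<alpha>)) i (x i)) \<partial>PiM {..<n} (\<lambda>i. PiM UNIV (\<lambda>d::'d. centered_normal s)))"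
    unfolding noise_layer_def shift_noise_layer_density_def using s
    by (intro nn_integral_cong) (simp add: prod_powr_distrib prod_ennreal normal_shift_ratio_nonneg prod_nonneg)
  also have "\<dots> = (\<Prod>i<n. \<integral>\<^sup>+y. (\<Prod>d\<in>UNIV. (\<lambda>d z. ennreal (normal_shift_ratio s z (c i d) powr \<alpha>)) d (y d)) \<partial>PiM UNIV (\<lambda>d::'d. centered_normal s))"
    using rm by (intro O.product_nn_integral_prod borel_measurable_prod_ennreal
        measurable_compose[OF measurable_component_singleton]) auto
  also have "\<dots> = (\<Prod>i<n. \<Prod>d\<in>UNIV. \<integral>\<^sup>+z. ennreal (normal_shift_ratio s z (c i d) powr \<alpha>) \<partial>centered_normal s)"
    using rm by (intro prod.cong refl I.product_nn_integral_prod) auto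
  also have "\<dots> = (\<Prod>i<n. \<Prod>d\<in>UNIV. ennreal (exp (\<alpha> * (\<alpha> - 1) * (c i d)\<^sup>2 / (2 * s\<^sup>2))))"
    by (simp add: nn_integral_normal_shift_ratio_powr[OF s])
  also have "\<dots> = ennreal (exp (\<Sum>i<n. \<Sum>d\<in>UNIV. \<alpha> * (\<alpha> - 1) * (c i d)\<^sup>2 / (2 * s\<^sup>2)))"
    by (simp add: exp_sum prod_ennreal prod_nonneg)
  finally show ?thesis .
qed

lemma measurable_noise_component:
  assumes "l < L" "i < n"
  shows "(\<lambda>N::nat \<Rightarrow> nat \<Rightarrow> 'd::finite \<Rightarrow> real. N l i c) \<in> borel_measurable (PiM {..<L} (\<lambda>_. noise_layer n s))"
proof -
  have 1: "(\<lambda>N::nat \<Rightarrow> nat \<Rightarrow> 'd \<Rightarrow> real. N l) \<in> PiM {..<L} (\<lambda>_. noise_layer n s) \<rightarrow>\<^sub>M noise_layer n s"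
    by (rule measurable_component_singleton) (use assms in simp)
  have 2: "(\<lambda>x::nat \<Rightarrow> 'd \<Rightarrow> real. x i) \<in> noise_layer n s \<rightarrow>\<^sub>M PiM UNIV (\<lambda>d::'d. centered_normal s)"
    unfolding noise_layer_def by (rule measurable_component_singleton) (use assms in simp)
  have 3: "(\<lambda>x::'d \<Rightarrow> real. x c) \<in> borel_measurable (PiM UNIV (\<lambda>d::'d. centered_normal s))"
    by (rule measurable_noise_row_component)
  show ?thesis by (rule measurable_compose[OF measurable_compose[OF 1 2] 3])
qed

lemma measurable_shift_noise_layer_density:
  assumes "\<And>i d. i < n \<Longrightarrow> (\<lambda>\<omega>. a \<omega> i d) \<in> borel_measurable \<Omega>"
    and "\<And>i d. i < n \<Longrightarrow> (\<lambda>\<omega>. b \<omega> i d) \<in> borel_measurable \<Omega>"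
  shows "(\<lambda>\<omega>. shift_noise_layer_density s n (b \<omega>) (a \<omega> :: nat \<Rightarrow> 'd::finite \<Rightarrow> real)) \<in> borel_measurable \<Omega>"
  unfolding shift_noise_layer_density_def
  using assms by (intro borel_measurable_prod borel_measurable_normal_shift_ratio) auto

lemma gap_noise_eq: "gap_noise n L s = PiM {..<L} (\<lambda>_. noise_layer n s)"
  unfolding gap_noise_def noise_layer_def centered_normal_def ..

section \<open>Measurability and norms of GAP layers\<close>

lemma borel_measurable_vec_lambda:
  assumes "\<And>c. (\<lambda>\<omega>. g c \<omega>) \<in> borel_measurable \<Omega>"
  shows "(\<lambda>\<omega>. (\<chi> c. g c \<omega>) :: real ^ 'd::finite) \<in> borel_measurable \<Omega>"
proof (rule borel_measurable_euclidean_space[THEN iffD2], rule ballI)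
  fix b :: "real ^ 'd" assume "b \<in> Basis"
  then obtain d where b: "b = axis d 1" unfolding Basis_vec_def Basis_real_def by blast
  show "(\<lambda>\<omega>. (\<chi> c. g c \<omega>) \<bullet> b) \<in> borel_measurable \<Omega>"
    unfolding b inner_axis using assms[of d] by simp
qed

lemma borel_measurable_vec_nth: "(\<lambda>x::real ^ 'd::finite. x $ d) \<in> borel_measurable borel"
proof -
  have "(\<lambda>x::real ^ 'd. x \<bullet> axis d 1) \<in> borel_measurable borel"
    by (rule borel_measurable_inner[OF measurable_ident_sets measurable_const]) auto
  then show ?thesis by (simp add: inner_axis)
qed

lemma borel_measurable_row_normalize: "(row_normalize :: real ^ 'd::finite \<Rightarrow> _) \<in> borel_measurable borel"
proof -
  have "row_normalize = (sgn :: real ^ 'd \<Rightarrow> _)" by (simp add: fun_eq_iff row_normalize_def sgn_div_norm)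
  then show ?thesis using borel_measurable_sgn by simp
qed

lemma norm_row_normalize_le: "norm (row_normalize x) \<le> 1"
  unfolding row_normalize_def by (cases "x = 0") auto

lemma norm_gap_H_le: "norm (gap_H f n X A w N l j) \<le> 1"
  by (cases l) (auto intro: norm_row_normalize_le)

lemma gap_H_cong_noise:
  assumes "\<And>k. k < l \<Longrightarrow> N k = N' k"
  shows "gap_H f n X A w N l j = gap_H f n X A w N' l j"
  using assms
proof (induction l arbitrary: j)
  case (Suc l)
  have IH: "gap_H f n X A w N l k = gap_H f n X A w N' l k" for k
    using Suc by auto
  have "N l = N' l" using Suc.prems by simp
  then show ?case by (simp only: gap_H.simps IH)
qed simp

lemma borel_measurable_gap_layer:
  assumes G: "\<And>k. k < n \<Longrightarrow> (\<lambda>\<omega>. G \<omega> k) \<in> borel_measurable \<Omega>"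
    and V: "\<And>c. (\<lambda>\<omega>. V \<omega> c) \<in> borel_measurable \<Omega>"
  shows "(\<lambda>\<omega>. row_normalize ((\<Sum>k<n. if B k then G \<omega> k else 0) + (\<chi> c. V \<omega> c) :: real ^ 'd::finite))
     \<in> borel_measurable \<Omega>"
proof -
  have "(\<lambda>\<omega>. \<Sum>k<n. if B k then G \<omega> k else 0) \<in> borel_measurable \<Omega>"
    using G by (intro borel_measurable_sum) auto
  then have "(\<lambda>\<omega>. (\<Sum>k<n. if B k then G \<omega> k else 0) + (\<chi> c. V \<omega> c) :: real ^ 'd) \<in> borel_measurable \<Omega>"
    using V by (intro borel_measurable_add borel_measurable_vec_lambda)
  from measurable_compose[OF this borel_measurable_row_normalize] show ?thesis by (simp only: o_def)
qed

lemma borel_measurable_gap_H: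
  fixes f :: "'w \<Rightarrow> 'x \<Rightarrow> real ^ 'd::finite"
  assumes W: "W \<in> \<Omega> \<rightarrow>\<^sub>M PW" and N: "N \<in> \<Omega> \<rightarrow>\<^sub>M PiM {..<L} (\<lambda>_. noise_layer n s)"
    and f: "\<And>x. (\<lambda>w. f w x) \<in> borel_measurable PW" and "l \<le> L" "j < n"
  shows "(\<lambda>\<omega>. gap_H f n X A (W \<omega>) (N \<omega>) l j) \<in> borel_measurable \<Omega>"
  using \<open>l \<le> L\<close> \<open>j < n\<close>
proof (induction l arbitrary: j)
  case 0
  show ?case
    using measurable_compose[OF measurable_compose[OF W f] borel_measurable_row_normalize]
    by (simp only: o_def gap_H.simps)
next
  case (Suc l)
  have noise: "(\<lambda>\<omega>. N \<omega> l j c) \<in> borel_measurable \<Omega>" for c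
    using measurable_compose[OF N measurable_noise_component[of l L j n c s]] Suc.prems
    by (simp add: o_def)
  show ?case unfolding gap_H.simps
    by (rule borel_measurable_gap_layer[OF Suc.IH noise]) (use Suc.prems in auto)
qed

lemma measurable_gap_Z_minus:
  fixes f :: "'w \<Rightarrow> 'x \<Rightarrow> real ^ 'd::finite"
  assumes f: "\<And>x. (\<lambda>w. f w x) \<in> borel_measurable PW"
  shows "(\<lambda>(w, N). \<lambda>i\<in>{..<n} - {r}. \<lambda>l\<in>{..L}. gap_H f n X A w N l i)
    \<in> PW \<Otimes>\<^sub>M PiM {..<L} (\<lambda>_. noise_layer n s) \<rightarrow>\<^sub>M PiM ({..<n} - {r}) (\<lambda>i. PiM {..L} (\<lambda>l. borel))"
proof -
  have "(\<lambda>z. gap_H f n X A (fst z) (snd z) l i) \<in> borel_measurable (PW \<Otimes>\<^sub>M PiM {..<L} (\<lambda>_. noise_layer n s))"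
    if "i < n" "l \<le> L" for i l
    using that by (intro borel_measurable_gap_H[OF measurable_fst measurable_snd f])
  then show ?thesis by (simp add: split_beta' measurable_restrict)
qed

section \<open>Coupling the noise of two adjacent datasets\<close>

text \<open>\<open>X\<close>, \<open>A\<close> describe D and \<open>X'\<close>, \<open>A'\<close> describe D'. \<open>coupled_rows w N l\<close> is layer l of the run on D
  driven by the shifted noise, expressed through the run on D' driven by N: off row r it is the run
  on D', and its r-th row \<open>coupled_root\<close> aggregates rows of D' along the edges of r in D.\<close>

locale gap_coupling =
  fixes f :: "'w \<Rightarrow> 'x \<Rightarrow> real ^ 'd::finite" and n r :: nat
    and X X' :: "nat \<Rightarrow> 'x" and A A' :: "nat \<Rightarrow> nat \<Rightarrow> bool"
  assumes r_less: "r < n"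
    and no_self_loop: "\<And>i. \<not> A i i"
    and X_eq: "\<And>j. j < n \<Longrightarrow> j \<noteq> r \<Longrightarrow> X' j = X j"
    and A_eq: "\<And>i j. i < n \<Longrightarrow> j < n \<Longrightarrow> i \<noteq> r \<Longrightarrow> j \<noteq> r \<Longrightarrow> A' i j = A i j"
begin

primrec coupled_root :: "'w \<Rightarrow> (nat \<Rightarrow> nat \<Rightarrow> 'd \<Rightarrow> real) \<Rightarrow> nat \<Rightarrow> real ^ 'd" where
  "coupled_root w N 0 = row_normalize (f w (X r))"
| "coupled_root w N (Suc l) =
     row_normalize ((\<Sum>j<n. if A r j then gap_H f n X' A' w N l j else 0) + (\<chi> c. N l r c))"

definition coupled_rows :: "'w \<Rightarrow> (nat \<Rightarrow> nat \<Rightarrow> 'd \<Rightarrow> real) \<Rightarrow> nat \<Rightarrow> nat \<Rightarrow> real ^ 'd" where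
  "coupled_rows w N l j = (if j = r then coupled_root w N l else gap_H f n X' A' w N l j)"

definition shift_row :: "'w \<Rightarrow> nat \<Rightarrow> (nat \<Rightarrow> nat \<Rightarrow> 'd \<Rightarrow> real) \<Rightarrow> nat \<Rightarrow> real ^ 'd" where
  "shift_row w l N i = (if i = r then 0 else
      (\<Sum>j<n. if A' i j then gap_H f n X' A' w N l j else 0) - (\<Sum>j<n. if A i j then coupled_rows w N l j else 0))"

definition noise_shift :: "'w \<Rightarrow> nat \<Rightarrow> (nat \<Rightarrow> nat \<Rightarrow> 'd \<Rightarrow> real) \<Rightarrow> nat \<Rightarrow> 'd \<Rightarrow> real" where
  "noise_shift w l N i d = shift_row w l N i $ d"

lemma gap_H_shifted_eq_coupled_rows:
  assumes R: "\<And>l' i d. l' < L \<Longrightarrow> i < n \<Longrightarrow> R l' i d = N l' i d + noise_shift w l' N i d"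
    and "l \<le> L" "j < n"
  shows "gap_H f n X A w R l j = coupled_rows w N l j"
  using \<open>l \<le> L\<close> \<open>j < n\<close>
proof (induction l arbitrary: j)
  case 0
  then show ?case using X_eq[of j] by (auto simp: coupled_rows_def)
next
  case (Suc l)
  have "(\<Sum>k<n. if A j k then gap_H f n X A w R l k else 0) = (\<Sum>k<n. if A j k then coupled_rows w N l k else 0)"
    using Suc by (intro sum.cong) auto
  moreover have "(\<chi> c. R l j c) = (\<chi> c. N l j c) + shift_row w l N j"
    using Suc.prems R by (simp add: noise_shift_def vec_eq_iff)
  moreover have "(\<Sum>k<n. if A r k then coupled_rows w N l k else 0) = (\<Sum>k<n. if A r k then gap_H f n X' A' w N l k else 0)"
    using no_self_loop by (intro sum.cong) (auto simp: coupled_rows_def)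
  ultimately show ?case
    by (cases "j = r") (simp_all add: coupled_rows_def shift_row_def add_ac)
qed

lemma noise_shift_cong_noise:
  assumes "\<And>k. k < l \<Longrightarrow> N k = N' k"
  shows "noise_shift w l N = noise_shift w l N'"
proof -
  have "gap_H f n X' A' w N l k = gap_H f n X' A' w N' l k" for k
    using assms by (rule gap_H_cong_noise)
  moreover have "coupled_root w N l = coupled_root w N' l"
  proof (cases l)
    case (Suc m)
    have "gap_H f n X' A' w N m k = gap_H f n X' A' w N' m k" for k
      using assms Suc by (intro gap_H_cong_noise) auto
    moreover have "N m = N' m" using assms Suc by simp
    ultimately show ?thesis using Suc by (simp only: coupled_root.simps)
  qed simp
  ultimately show ?thesis
    unfolding noise_shift_def shift_row_def coupled_rows_def by (simp only:)
qed

lemma shift_row_eq: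
  assumes "i < n" "i \<noteq> r"
  shows "shift_row w l N i = (if A' i r then gap_H f n X' A' w N l r else 0) - (if A i r then coupled_root w N l else 0)"
proof -
  have r: "r \<in> {..<n}" using r_less by simp
  have "(\<Sum>j<n. if A' i j then gap_H f n X' A' w N l j else 0)
      = (if A' i r then gap_H f n X' A' w N l r else 0) + (\<Sum>j\<in>{..<n}-{r}. if A' i j then gap_H f n X' A' w N l j else 0)"
    by (subst sum.remove[OF _ r]) auto
  moreover have "(\<Sum>j<n. if A i j then coupled_rows w N l j else 0)
      = (if A i r then coupled_root w N l else 0) + (\<Sum>j\<in>{..<n}-{r}. if A i j then coupled_rows w N l j else 0)"
    by (subst sum.remove[OF _ r]) (auto simp: coupled_rows_def)
  moreover have "(\<Sum>j\<in>{..<n}-{r}. if A i j then coupled_rows w N l j else 0)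
      = (\<Sum>j\<in>{..<n}-{r}. if A' i j then gap_H f n X' A' w N l j else 0)"
    using A_eq assms by (intro sum.cong) (auto simp: coupled_rows_def)
  ultimately show ?thesis using assms unfolding shift_row_def by simp
qed

lemma sum_noise_shift_sq_le:
  assumes "card {i. i < n \<and> A i r} \<le> D" "card {i. i < n \<and> A' i r} \<le> D"
  shows "(\<Sum>i<n. \<Sum>d\<in>UNIV. (noise_shift w l N i d)\<^sup>2) \<le> 4 * real D"
proof -
  have norm_le: "(norm (shift_row w l N i))\<^sup>2 \<le> 2 * of_bool (A' i r) + 2 * of_bool (A i r)"
    if i: "i < n" for i
  proof (cases "i = r")
    case False
    let ?a = "if A' i r then gap_H f n X' A' w N l r else 0" and ?b = "if A i r then coupled_root w N l else 0"
    have a: "norm ?a \<le> of_bool (A' i r)" using norm_gap_H_le by auto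
    have b: "norm ?b \<le> of_bool (A i r)"
      by (cases l) (auto intro: norm_row_normalize_le)
    have "(norm (?a - ?b))\<^sup>2 \<le> (norm ?a + norm ?b)\<^sup>2"
      by (intro power_mono norm_triangle_ineq4) auto
    also have "\<dots> \<le> 2 * (norm ?a)\<^sup>2 + 2 * (norm ?b)\<^sup>2"
      using sum_squares_bound[of "norm ?a" "norm ?b"] by (simp add: power2_eq_square algebra_simps)
    also have "(norm ?a)\<^sup>2 \<le> of_bool (A' i r)"
      using a by (cases "A' i r") (auto simp: power_le_one)
    also have "(norm ?b)\<^sup>2 \<le> of_bool (A i r)"
      using b by (cases "A i r") (auto simp: power_le_one)
    finally show ?thesis using shift_row_eq[OF i False] by simp
  qed (simp add: shift_row_def)
  have "(\<Sum>i<n. \<Sum>d\<in>UNIV. (noise_shift w l N i d)\<^sup>2) = (\<Sum>i<n. (norm (shift_row w l N i))\<^sup>2)"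
    unfolding noise_shift_def power2_norm_eq_inner inner_vec_def by (simp add: power2_eq_square)
  also have "\<dots> \<le> (\<Sum>i<n. 2 * of_bool (A' i r) + 2 * of_bool (A i r))"
    by (intro sum_mono norm_le) simp
  also have "\<dots> = 2 * real (card {i. i < n \<and> A' i r}) + 2 * real (card {i. i < n \<and> A i r})"
    by (simp add: sum.distrib sum_distrib_left[symmetric] Int_def conj_commute)
  finally show ?thesis using assms by simp
qed

lemma borel_measurable_noise_shift:
  assumes W: "W \<in> \<Omega> \<rightarrow>\<^sub>M PW" and N: "N \<in> \<Omega> \<rightarrow>\<^sub>M PiM {..<L} (\<lambda>_. noise_layer n s)"
    and f: "\<And>x. (\<lambda>w. f w x) \<in> borel_measurable PW" and "l \<le> L"
  shows "(\<lambda>\<omega>. noise_shift (W \<omega>) l (N \<omega>) i d) \<in> borel_measurable \<Omega>"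
proof -
  have H: "(\<lambda>\<omega>. gap_H f n X'' A'' (W \<omega>) (N \<omega>) l' k) \<in> borel_measurable \<Omega>"
    if "l' \<le> L" "k < n" for X'' A'' l' k
    using borel_measurable_gap_H[OF W N f that] .
  have root: "(\<lambda>\<omega>. coupled_root (W \<omega>) (N \<omega>) l) \<in> borel_measurable \<Omega>"
  proof (cases l)
    case 0
    show ?thesis
      using measurable_compose[OF measurable_compose[OF W f] borel_measurable_row_normalize]
      unfolding 0 by (simp only: o_def coupled_root.simps)
  next
    case (Suc m)
    have noise: "(\<lambda>\<omega>. N \<omega> m r c) \<in> borel_measurable \<Omega>" for c
      using measurable_compose[OF N measurable_noise_component[of m L r n c s]] Suc \<open>l \<le> L\<close> r_less
      by (simp add: o_def)
    show ?thesis unfolding Suc coupled_root.simps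
      by (rule borel_measurable_gap_layer[OF H noise]) (use Suc \<open>l \<le> L\<close> in auto)
  qed
  have "(\<lambda>\<omega>. shift_row (W \<omega>) l (N \<omega>) i) \<in> borel_measurable \<Omega>"
    unfolding shift_row_def coupled_rows_def
    using H[of l] root \<open>l \<le> L\<close> by measurable
  from measurable_compose[OF this borel_measurable_vec_nth[of d]]
  show ?thesis unfolding noise_shift_def by (simp only: o_def)
qed

definition shifted_noise :: "nat \<Rightarrow> 'w \<Rightarrow> (nat \<Rightarrow> nat \<Rightarrow> 'd \<Rightarrow> real) \<Rightarrow> nat \<Rightarrow> nat \<Rightarrow> 'd \<Rightarrow> real" where
  "shifted_noise L w N = (\<lambda>l\<in>{..<L}. shift_noise_layer n (N l) (noise_shift w l N))"

definition shift_density :: "real \<Rightarrow> nat \<Rightarrow> 'w \<Rightarrow> (nat \<Rightarrow> nat \<Rightarrow> 'd \<Rightarrow> real) \<Rightarrow> real" where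
  "shift_density s L w N = (\<Prod>l<L. shift_noise_layer_density s n (noise_shift w l N) (N l))"

lemma gap_Z_rows_shifted_noise:
  "(\<lambda>i\<in>{..<n} - {r}. \<lambda>l\<in>{..L}. gap_H f n X A w (shifted_noise L w N) l i)
     = (\<lambda>i\<in>{..<n} - {r}. \<lambda>l\<in>{..L}. gap_H f n X' A' w N l i)"
proof -
  have eq: "gap_H f n X A w (shifted_noise L w N) l i = coupled_rows w N l i" if "l \<le> L" "i < n" for l i
    by (rule gap_H_shifted_eq_coupled_rows[OF _ that])
      (simp add: shifted_noise_def shift_noise_layer_def)
  show ?thesis by (intro restrict_ext) (simp add: eq coupled_rows_def)
qed

lemma measurable_coupled_noise_layer:
  assumes w: "w \<in> space PW" and f: "\<And>x. (\<lambda>w. f w x) \<in> borel_measurable PW" and l: "l < L"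
  shows "(\<lambda>N. shift_noise_layer n (N l) (noise_shift w l N)) \<in> PiM {..<L} (\<lambda>_. noise_layer n s) \<rightarrow>\<^sub>M noise_layer n s"
    and "(\<lambda>N. shift_noise_layer_density s n (noise_shift w l N) (N l)) \<in> borel_measurable (PiM {..<L} (\<lambda>_. noise_layer n s))"
proof -
  have noise: "(\<lambda>N. N l i d) \<in> borel_measurable (PiM {..<L} (\<lambda>_. noise_layer n s :: (nat \<Rightarrow> 'd \<Rightarrow> real) measure))"
    if "i < n" for i d
    using l that by (rule measurable_noise_component)
  have shift: "(\<lambda>N. noise_shift w l N i d) \<in> borel_measurable (PiM {..<L} (\<lambda>_. noise_layer n s))" for i d
    using l by (intro borel_measurable_noise_shift[OF measurable_const[OF w] measurable_ident_sets[OF refl] f]) auto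
  have "(\<lambda>N. shift_noise_layer n (N l) (noise_shift w l N)) \<in> PiM {..<L} (\<lambda>_. noise_layer n s) \<rightarrow>\<^sub>M PiM {..<n} (\<lambda>i. PiM UNIV (\<lambda>d::'d. centered_normal s))"
    unfolding shift_noise_layer_def
  proof (intro measurable_restrict)
    fix i d assume "i \<in> {..<n}"
    then show "(\<lambda>N. N l i d + noise_shift w l N i d) \<in> PiM {..<L} (\<lambda>_. noise_layer n s) \<rightarrow>\<^sub>M centered_normal s"
      using borel_measurable_add[OF noise shift] by (simp add: measurable_cong_sets[OF refl sets_centered_normal])
  qed
  then show "(\<lambda>N. shift_noise_layer n (N l) (noise_shift w l N)) \<in> PiM {..<L} (\<lambda>_. noise_layer n s) \<rightarrow>\<^sub>M noise_layer n s"
    by (simp only: noise_layer_def)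
  show "(\<lambda>N. shift_noise_layer_density s n (noise_shift w l N) (N l)) \<in> borel_measurable (PiM {..<L} (\<lambda>_. noise_layer n s))"
    using noise shift by (rule measurable_shift_noise_layer_density)
qed

lemma borel_measurable_shift_density:
  assumes f: "\<And>x. (\<lambda>w. f w x) \<in> borel_measurable PW"
  shows "(\<lambda>z. shift_density s L (fst z) (snd z)) \<in> borel_measurable (PW \<Otimes>\<^sub>M PiM {..<L} (\<lambda>_. noise_layer n s))"
  unfolding shift_density_def
proof (intro borel_measurable_prod measurable_shift_noise_layer_density)
  fix l i and d :: 'd assume "l \<in> {..<L}" "i < n"
  then show "(\<lambda>z. snd z l i d) \<in> borel_measurable (PW \<Otimes>\<^sub>M PiM {..<L} (\<lambda>_. noise_layer n s))"
    using measurable_compose[OF measurable_snd measurable_noise_component[of l L i n d s]]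
    by (simp add: o_def)
  show "(\<lambda>z. noise_shift (fst z) l (snd z) i d) \<in> borel_measurable (PW \<Otimes>\<^sub>M PiM {..<L} (\<lambda>_. noise_layer n s))"
    using \<open>l \<in> {..<L}\<close> by (intro borel_measurable_noise_shift[OF measurable_fst measurable_snd f]) auto
qed

lemma nn_integral_shifted_noise:
  assumes s: "s > 0" and w: "w \<in> space PW" and f: "\<And>x. (\<lambda>w. f w x) \<in> borel_measurable PW"
    and H: "H \<in> borel_measurable (PiM {..<L} (\<lambda>_. noise_layer n s))"
  shows "(\<integral>\<^sup>+N. H (shifted_noise L w N) * ennreal (shift_density s L w N) \<partial>PiM {..<L} (\<lambda>_. noise_layer n s))
    = integral\<^sup>N (PiM {..<L} (\<lambda>_. noise_layer n s)) H"
  unfolding shifted_noise_def shift_density_def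
proof (rule nn_integral_adaptive_shift[of "noise_layer n s" "shift_noise_layer n" "shift_noise_layer_density s n" "noise_shift w"])
  show "sigma_finite_measure (noise_layer n s :: (nat \<Rightarrow> 'd \<Rightarrow> real) measure)"
    by (rule prob_space_imp_sigma_finite[OF prob_space_noise_layer[OF s]])
  show "(\<integral>\<^sup>+x. G (shift_noise_layer n x b) * ennreal (shift_noise_layer_density s n b x) \<partial>noise_layer n s)
      = integral\<^sup>N (noise_layer n s) G"
    if "G \<in> borel_measurable (noise_layer n s :: (nat \<Rightarrow> 'd \<Rightarrow> real) measure)" for b G
    by (rule nn_integral_noise_layer_shift[OF s that])
  show "shift_noise_layer_density s n b x \<ge> 0" for b x :: "nat \<Rightarrow> 'd \<Rightarrow> real"
      by (rule shift_noise_layer_density_nonneg)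
  show "noise_shift w l N = noise_shift w l N'" if "\<And>k. k < l \<Longrightarrow> N k = N' k" for l N N'
    using that by (rule noise_shift_cong_noise)
  show "(\<lambda>N. shift_noise_layer n (N l) (noise_shift w l N)) \<in> PiM {..<L'} (\<lambda>_. noise_layer n s) \<rightarrow>\<^sub>M noise_layer n s"
    if "l < L'" for L' l
    by (rule measurable_coupled_noise_layer(1)[OF w f that])
  show "(\<lambda>N. shift_noise_layer_density s n (noise_shift w l N) (N l)) \<in> borel_measurable (PiM {..<L'} (\<lambda>_. noise_layer n s))"
    if "l < L'" for L' l
    by (rule measurable_coupled_noise_layer(2)[OF w f that])
qed (rule H)

lemma nn_integral_shift_density_powr_le:
  assumes s: "s > 0" and \<alpha>: "\<alpha> \<ge> 1" and w: "w \<in> space PW" and f: "\<And>x. (\<lambda>w. f w x) \<in> borel_measurable PW"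
    and deg: "card {i. i < n \<and> A i r} \<le> D" "card {i. i < n \<and> A' i r} \<le> D"
  shows "(\<integral>\<^sup>+N. ennreal (shift_density s L w N powr \<alpha>) \<partial>PiM {..<L} (\<lambda>_. noise_layer n s))
    \<le> ennreal (exp (real L * (\<alpha> * (\<alpha> - 1) * (4 * real D) / (2 * s\<^sup>2))))"
proof -
  define E where "E = ennreal (exp (\<alpha> * (\<alpha> - 1) * (4 * real D) / (2 * s\<^sup>2)))"
  have layer_bound: "(\<integral>\<^sup>+y. ennreal (shift_noise_layer_density s n (noise_shift w l N) y powr \<alpha>) \<partial>noise_layer n s) \<le> E"
    for l N
  proof -
    have "(\<Sum>i<n. \<Sum>d\<in>UNIV. \<alpha> * (\<alpha> - 1) * (noise_shift w l N i d)\<^sup>2 / (2 * s\<^sup>2))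
        = \<alpha> * (\<alpha> - 1) / (2 * s\<^sup>2) * (\<Sum>i<n. \<Sum>d\<in>UNIV. (noise_shift w l N i d)\<^sup>2)"
      by (simp add: sum_distrib_left)
    also have "\<dots> \<le> \<alpha> * (\<alpha> - 1) / (2 * s\<^sup>2) * (4 * real D)"
      using \<alpha> sum_noise_shift_sq_le[OF deg] by (intro mult_left_mono) auto
    finally show ?thesis
      unfolding E_def nn_integral_shift_noise_layer_density_powr[OF s] by (intro ennreal_leI) simp
  qed
  have "(\<integral>\<^sup>+N. ennreal (shift_density s L w N powr \<alpha>) \<partial>PiM {..<L} (\<lambda>_. noise_layer n s)) \<le> E ^ L"
    unfolding shift_density_def
  proof (rule nn_integral_adaptive_prod_powr_le[of "noise_layer n s" "shift_noise_layer_density s n" "noise_shift w"])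
    show "sigma_finite_measure (noise_layer n s :: (nat \<Rightarrow> 'd \<Rightarrow> real) measure)"
      by (rule prob_space_imp_sigma_finite[OF prob_space_noise_layer[OF s]])
    show "shift_noise_layer_density s n b x \<ge> 0" for b x :: "nat \<Rightarrow> 'd \<Rightarrow> real"
      by (rule shift_noise_layer_density_nonneg)
    show "noise_shift w l N = noise_shift w l N'" if "\<And>k. k < l \<Longrightarrow> N k = N' k" for l N N'
      using that by (rule noise_shift_cong_noise)
    show "(\<lambda>N. shift_noise_layer_density s n (noise_shift w l N) (N l)) \<in> borel_measurable (PiM {..<L'} (\<lambda>_. noise_layer n s))"
      if "l < L'" for L' l
      by (rule measurable_coupled_noise_layer(2)[OF w f that])
  qed (rule layer_bound)
  also have "E ^ L = ennreal (exp (real L * (\<alpha> * (\<alpha> - 1) * (4 * real D) / (2 * s\<^sup>2))))"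
    unfolding E_def by (simp add: ennreal_power exp_of_nat_mult[symmetric])
  finally show ?thesis .
qed

definition coupling_density :: "'w measure \<Rightarrow> 'w measure \<Rightarrow> real \<Rightarrow> nat \<Rightarrow> 'w \<times> (nat \<Rightarrow> nat \<Rightarrow> 'd \<Rightarrow> real) \<Rightarrow> real" where
  "coupling_density PW PW' s L z = enn2real (RN_deriv PW' PW (fst z)) * shift_density s L (fst z) (snd z)"

lemma gap_Z_minus_dist_eq_distr_density:
  assumes s: "s > 0" and PW: "prob_space PW" "prob_space PW'"
    and sets_eq: "sets PW = sets PW'" and ac: "absolutely_continuous PW' PW"
    and f: "\<And>x. (\<lambda>w. f w x) \<in> borel_measurable PW"
  shows "gap_Z_minus_dist f n L s r X A PW
    = distr (density (PW' \<Otimes>\<^sub>M gap_noise n L s) (\<lambda>z. ennreal (coupling_density PW PW' s L z)))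
        (PiM ({..<n} - {r}) (\<lambda>i. PiM {..L} (\<lambda>l. borel)))
        (\<lambda>(w, N). \<lambda>i\<in>{..<n} - {r}. \<lambda>l\<in>{..L}. gap_H f n X' A' w N l i)"
  unfolding gap_Z_minus_dist_def gap_noise_eq coupling_density_def
proof (rule distr_pair_measure_eq_distr_density[where T = "shifted_noise L"])
  have f': "\<And>x. (\<lambda>w. f w x) \<in> borel_measurable PW'" using f sets_eq by (simp cong: measurable_cong_sets)
  show "sigma_finite_measure PW" "sigma_finite_measure PW'"
    using PW by (simp_all add: prob_space_imp_sigma_finite)
  show "sigma_finite_measure (PiM {..<L} (\<lambda>_. noise_layer n s :: (nat \<Rightarrow> 'd \<Rightarrow> real) measure))"
    by (intro prob_space_imp_sigma_finite prob_space_PiM prob_space_noise_layer s)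
  show "(\<lambda>(w, N). \<lambda>i\<in>{..<n} - {r}. \<lambda>l\<in>{..L}. gap_H f n X A w N l i)
      \<in> PW \<Otimes>\<^sub>M PiM {..<L} (\<lambda>_. noise_layer n s) \<rightarrow>\<^sub>M PiM ({..<n} - {r}) (\<lambda>i. PiM {..L} (\<lambda>l. borel))"
    by (rule measurable_gap_Z_minus[OF f])
  show "(\<lambda>(w, N). \<lambda>i\<in>{..<n} - {r}. \<lambda>l\<in>{..L}. gap_H f n X' A' w N l i)
      \<in> PW' \<Otimes>\<^sub>M PiM {..<L} (\<lambda>_. noise_layer n s) \<rightarrow>\<^sub>M PiM ({..<n} - {r}) (\<lambda>i. PiM {..L} (\<lambda>l. borel))"
    by (rule measurable_gap_Z_minus[OF f'])
  show "(\<lambda>z. shift_density s L (fst z) (snd z)) \<in> borel_measurable (PW' \<Otimes>\<^sub>M PiM {..<L} (\<lambda>_. noise_layer n s))"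
    by (rule borel_measurable_shift_density[OF f'])
  show "shift_density s L w N \<ge> 0" for w N
    unfolding shift_density_def by (intro prod_nonneg shift_noise_layer_density_nonneg)
  show "(\<integral>\<^sup>+N. H (shifted_noise L w N) * ennreal (shift_density s L w N) \<partial>PiM {..<L} (\<lambda>_. noise_layer n s))
      = integral\<^sup>N (PiM {..<L} (\<lambda>_. noise_layer n s)) H"
    if "w \<in> space PW" "H \<in> borel_measurable (PiM {..<L} (\<lambda>_. noise_layer n s))" for w H
    by (rule nn_integral_shifted_noise[OF s that(1) f that(2)])
  show "(\<lambda>(w, N). \<lambda>i\<in>{..<n} - {r}. \<lambda>l\<in>{..L}. gap_H f n X A w N l i) (w, shifted_noise L w N)
      = (\<lambda>(w, N). \<lambda>i\<in>{..<n} - {r}. \<lambda>l\<in>{..L}. gap_H f n X' A' w N l i) (w, N)" for w N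
    using gap_Z_rows_shifted_noise by simp
qed (rule sets_eq ac)+

lemma nn_integral_coupling_density_powr_le:
  assumes s: "s > 0" and \<alpha>: "\<alpha> \<ge> 1" and f: "\<And>x. (\<lambda>w. f w x) \<in> borel_measurable PW'"
    and deg: "card {i. i < n \<and> A i r} \<le> D" "card {i. i < n \<and> A' i r} \<le> D"
  shows "(\<integral>\<^sup>+z. ennreal (coupling_density PW PW' s L z powr \<alpha>) \<partial>(PW' \<Otimes>\<^sub>M gap_noise n L s))
    \<le> renyi_moment \<alpha> PW PW' * ennreal (exp (real L * (\<alpha> * (\<alpha> - 1) * (4 * real D) / (2 * s\<^sup>2))))"
  unfolding coupling_density_def renyi_moment_def gap_noise_eq
proof (rule nn_integral_pair_density_powr_le)
  show "sigma_finite_measure (PiM {..<L} (\<lambda>_. noise_layer n s :: (nat \<Rightarrow> 'd \<Rightarrow> real) measure))"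
    by (intro prob_space_imp_sigma_finite prob_space_PiM prob_space_noise_layer s)
  show "(\<lambda>z. shift_density s L (fst z) (snd z)) \<in> borel_measurable (PW' \<Otimes>\<^sub>M PiM {..<L} (\<lambda>_. noise_layer n s))"
    by (rule borel_measurable_shift_density[OF f])
  show "shift_density s L w N \<ge> 0" for w N
    unfolding shift_density_def by (intro prod_nonneg shift_noise_layer_density_nonneg)
  show "(\<integral>\<^sup>+N. ennreal (shift_density s L w N powr \<alpha>) \<partial>PiM {..<L} (\<lambda>_. noise_layer n s))
      \<le> ennreal (exp (real L * (\<alpha> * (\<alpha> - 1) * (4 * real D) / (2 * s\<^sup>2))))" if "w \<in> space PW'" for w
    by (rule nn_integral_shift_density_powr_le[OF s \<alpha> that f deg])
qed simp_all

lemma renyi_divergence_gap_Z_minus_dist_le: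
  assumes \<alpha>: "\<alpha> > 1" and s: "s > 0" and PW: "prob_space PW" "prob_space PW'"
    and sets_eq: "sets PW = sets PW'" and ac: "absolutely_continuous PW' PW"
    and finite: "renyi_moment \<alpha> PW PW' \<noteq> \<infinity>"
    and f: "\<And>x. (\<lambda>w. f w x) \<in> borel_measurable PW"
    and deg: "card {i. i < n \<and> A i r} \<le> D" "card {i. i < n \<and> A' i r} \<le> D"
  shows "renyi_divergence \<alpha> (gap_Z_minus_dist f n L s r X A PW) (gap_Z_minus_dist f n L s r X' A' PW')
    \<le> ereal (ln (enn2real (renyi_moment \<alpha> PW PW') * exp (real L * (\<alpha> * (\<alpha> - 1) * (4 * real D) / (2 * s\<^sup>2)))) / (\<alpha> - 1))"
proof -
  define B where "B = enn2real (renyi_moment \<alpha> PW PW') * exp (real L * (\<alpha> * (\<alpha> - 1) * (4 * real D) / (2 * s\<^sup>2)))"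
  have f': "\<And>x. (\<lambda>w. f w x) \<in> borel_measurable PW'" using f sets_eq by (simp cong: measurable_cong_sets)
  have noise: "prob_space (gap_noise n L s :: (nat \<Rightarrow> nat \<Rightarrow> 'd \<Rightarrow> real) measure)"
    unfolding gap_noise_eq by (intro prob_space_PiM prob_space_noise_layer s)
  note dist_eq = gap_Z_minus_dist_eq_distr_density[OF s PW sets_eq ac f]
  have "prob_space (gap_Z_minus_dist f n L s r X A PW)"
    unfolding gap_Z_minus_dist_def
    by (intro prob_space.prob_space_distr measurable_gap_Z_minus[OF f, folded gap_noise_eq] prob_space_pair PW(1) noise)
  note P = this[unfolded dist_eq]
  have meas: "coupling_density PW PW' s L \<in> borel_measurable (PW' \<Otimes>\<^sub>M gap_noise n L s)"
    unfolding coupling_density_def gap_noise_eq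
    using borel_measurable_shift_density[OF f'] by measurable
  have nonneg: "coupling_density PW PW' s L z \<ge> 0" for z
    unfolding coupling_density_def shift_density_def
    by (intro mult_nonneg_nonneg prod_nonneg shift_noise_layer_density_nonneg) simp_all
  have "renyi_moment \<alpha> PW PW' = ennreal (enn2real (renyi_moment \<alpha> PW PW'))"
    using finite by (simp add: ennreal_enn2real_if)
  then have bound: "(\<integral>\<^sup>+z. ennreal (coupling_density PW PW' s L z powr \<alpha>) \<partial>(PW' \<Otimes>\<^sub>M gap_noise n L s)) \<le> ennreal B"
    using nn_integral_coupling_density_powr_le[OF s less_imp_le[OF \<alpha>] f' deg, where PW = PW]
    unfolding B_def by (simp add: ennreal_mult)
  show ?thesis
    unfolding dist_eq B_def[symmetric]
    unfolding gap_Z_minus_dist_def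
    by (rule renyi_divergence_distr_density_le[OF \<alpha> prob_space_pair[OF PW(2) noise]
          measurable_gap_Z_minus[OF f', folded gap_noise_eq] meas nonneg P bound])
qed

end

theorem theorem1:
  fixes f :: "'w \<Rightarrow> real ^ 'f \<Rightarrow> real ^ 'd::finite"
    and PW PW' :: "'w measure"
    and X X' :: "nat \<Rightarrow> real ^ 'f"
    and Y Y' :: "nat \<Rightarrow> nat"
    and A A' :: "nat \<Rightarrow> nat \<Rightarrow> bool"
    and n m C r k L D :: nat
    and \<alpha> s \<gamma>\<^sub>1 :: real
  assumes "\<alpha> > 1" and "s > 0" and "L \<ge> 1" and "D \<ge> 1"
    and adj: "node_adjacent n m C r X Y A X' Y' A' \<or> k_neighbor_adjacent k n m C r X Y A X' Y' A'"
    and deg: "max_out_degree_le n A D" "max_out_degree_le n A' D"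
    and PW: "prob_space PW" "prob_space PW'" "sets PW' = sets PW"
    and f_meas: "\<And>x. (\<lambda>w. f w x) \<in> PW \<rightarrow>\<^sub>M borel"
    and W_div: "renyi_divergence \<alpha> PW PW' \<le> ereal \<gamma>\<^sub>1"
  shows "renyi_divergence \<alpha> (gap_Z_minus_dist f n L s r X A PW) (gap_Z_minus_dist f n L s r X' A' PW')
           \<le> ereal (\<gamma>\<^sub>1 + 4 * real D * real L * \<alpha> / (2 * s\<^sup>2))"
proof -
  have "node_adjacent n m C r X Y A X' Y' A'"
    using adj unfolding k_neighbor_adjacent_def by blast
  then have "r < n" "\<And>i. \<not> A i i" "\<And>j. j < n \<Longrightarrow> j \<noteq> r \<Longrightarrow> X' j = X j"
    "\<And>i j. i < n \<Longrightarrow> j < n \<Longrightarrow> i \<noteq> r \<Longrightarrow> j \<noteq> r \<Longrightarrow> A' i j = A i j"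
    unfolding node_adjacent_def valid_dataset_def by blast+
  then interpret gap_coupling f n r X X' A A'
    by unfold_locales
  have deg_r: "card {i. i < n \<and> A i r} \<le> D" "card {i. i < n \<and> A' i r} \<le> D"
    using deg r_less unfolding max_out_degree_le_def by blast+
  note W = renyi_divergence_le_ereal_D[OF W_div]
  have pos: "enn2real (renyi_moment \<alpha> PW PW') > 0"
    using renyi_moment_neq_0[OF PW(1,2) W(1,2)] W(3) \<open>\<alpha> > 1\<close>
    by (simp add: enn2real_positive_iff zero_less_iff_neq_zero top.not_eq_extremum)
  have "real L * (\<alpha> * (\<alpha> - 1) * (4 * real D) / (2 * s\<^sup>2)) / (\<alpha> - 1) = 4 * real D * real L * \<alpha> / (2 * s\<^sup>2)"
    using \<open>\<alpha> > 1\<close> \<open>s > 0\<close> by (simp add: field_simps)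
  then have "ln (enn2real (renyi_moment \<alpha> PW PW') * exp (real L * (\<alpha> * (\<alpha> - 1) * (4 * real D) / (2 * s\<^sup>2)))) / (\<alpha> - 1)
      \<le> \<gamma>\<^sub>1 + 4 * real D * real L * \<alpha> / (2 * s\<^sup>2)"
    using pos W(4) by (simp add: ln_mult add_divide_distrib)
  with renyi_divergence_gap_Z_minus_dist_le[OF \<open>\<alpha> > 1\<close> \<open>s > 0\<close> PW(1,2) W(1-3) f_meas deg_r]
  show ?thesis by (meson ereal_less_eq(3) order_trans)
qed

end
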